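(* Let $\mathcal{F}$ be a family of objects such that any subset of $n$ objects from $\mathcal{F}$ admits a unimax coloring with $\gamma_{\mathrm{um}}(n)$ colors that allows weak deletions at the cost of $r(n)$ recolorings, where $\gamma_{\mathrm{um}}$ and $r$ are non-decreasing. Then one can maintain a conflict-free coloring of a set $S$ of objects from $\mathcal{F}$ under insertions and deletions such that the number of used colors is $O\big(\sum_{i=0}^{k}\gamma_{\mathrm{um}}(2^i)\log n\big)$ for some $k=\Theta(\log n)$, the number of recolorings per insertion is $O(\log n)$, and the number of recolorings per deletion is $O(r(8n)+1)$, where $n$ is the current number of objects in $S$.
   Context: Objects are either regions in the plane (colored with respect to points) or points (colored with respect to a family of ranges). For $q$ a point (resp. range), $S_q$ is the set of objects of $S$ related to $q$. A coloring is conflict-free if for every $q$ with $S_q\ne\emptyset$ some object in $S_q$ has a color unique in $S_q$; it is unimax if (colors being integers) the maximum color in $S_q$ is attained by a unique object whenever $S_q\ne\emptyset$. A unimax coloring allows weak deletions at cost $r(n)$ if, once a set of $n_0$ objects has been unimax-colored with $\gamma_{\mathrm{um}}(n_0)$ colors, objects can be deleted one by one, each deletion recoloring at most $r(n_0)$ of the remaining objects, so that the coloring stays unimax and the number of colors never exceeds $\gamma_{\mathrm{um}}(n_0)$. The number of recolorings of an update is the number of objects whose color changes. *)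

theory Defs
  imports Complex_Main "HOL-Library.Landau_Symbols"
begin

text \<open>Abstract setting: objects of type 'o, "queries" (points or ranges) of type 'q,
  and a relation rel q s meaning that object s is related to q.
  For a set S of objects, S_q = {s \<in> S. rel q s}.\<close>

definition rel_set :: "('q \<Rightarrow> 'o \<Rightarrow> bool) \<Rightarrow> 'o set \<Rightarrow> 'q \<Rightarrow> 'o set" where
  "rel_set rel S q = {s \<in> S. rel q s}"

definition conflict_free :: "('q \<Rightarrow> 'o \<Rightarrow> bool) \<Rightarrow> 'o set \<Rightarrow> ('o \<Rightarrow> 'c) \<Rightarrow> bool" where
  "conflict_free rel S c \<longleftrightarrow>
     (\<forall>q. rel_set rel S q \<noteq> {} \<longrightarrow>
        (\<exists>s\<in>rel_set rel S q. \<forall>t\<in>rel_set rel S q. t \<noteq> s \<longrightarrow> c t \<noteq> c s))"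

definition unimax :: "('q \<Rightarrow> 'o \<Rightarrow> bool) \<Rightarrow> 'o set \<Rightarrow> ('o \<Rightarrow> int) \<Rightarrow> bool" where
  "unimax rel S c \<longleftrightarrow>
     (\<forall>q. rel_set rel S q \<noteq> {} \<longrightarrow>
        (\<exists>s\<in>rel_set rel S q. \<forall>t\<in>rel_set rel S q. t \<noteq> s \<longrightarrow> c t < c s))"

definition recolorings :: "'o set \<Rightarrow> ('o \<Rightarrow> 'c) \<Rightarrow> ('o \<Rightarrow> 'c) \<Rightarrow> nat" where
  "recolorings T c c' = card {s \<in> T. c' s \<noteq> c s}"

text \<open>The unimax coloring c0 of S0 (with at most gamma(|S0|) colors) allows weak deletions
  at cost r: there is a set of reachable states (S, c), containing (S0, c0), all of which
  are unimax with at most gamma(|S0|) colors, such that from every state any object can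
  be deleted, recoloring at most r(|S0|) of the remaining objects, reaching again a state
  of the set.  (Such an invariant set exists iff a deletion strategy exists.)\<close>
definition allows_weak_deletions ::
  "('q \<Rightarrow> 'o \<Rightarrow> bool) \<Rightarrow> (nat \<Rightarrow> nat) \<Rightarrow> (nat \<Rightarrow> nat) \<Rightarrow> 'o set \<Rightarrow> ('o \<Rightarrow> int) \<Rightarrow> bool" where
  "allows_weak_deletions rel \<gamma> r S0 c0 \<longleftrightarrow>
     (\<exists>Inv. (S0, c0) \<in> Inv \<and>
        (\<forall>(S, c) \<in> Inv.
            S \<subseteq> S0 \<and> unimax rel S c \<and> card (c ` S) \<le> \<gamma> (card S0) \<and>
            (\<forall>x\<in>S. \<exists>c'. (S - {x}, c') \<in> Inv \<and>
                        recolorings (S - {x}) c c' \<le> r (card S0))))"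

definition dynamic_cf_scheme ::
  "('q \<Rightarrow> 'o \<Rightarrow> bool) \<Rightarrow> 'o set \<Rightarrow>
   (nat \<Rightarrow> real) \<Rightarrow> (nat \<Rightarrow> real) \<Rightarrow> (nat \<Rightarrow> real) \<Rightarrow> ('o set \<times> ('o \<Rightarrow> nat)) set \<Rightarrow> bool" where
  "dynamic_cf_scheme rel F colB insB delB Inv \<longleftrightarrow>
     (\<exists>c0. ({}, c0) \<in> Inv) \<and>
     (\<forall>(S, c) \<in> Inv.
        finite S \<and> S \<subseteq> F \<and> conflict_free rel S c \<and>
        real (card (c ` S)) \<le> colB (card S) \<and>
        (\<forall>x \<in> F - S. \<exists>c'. (insert x S, c') \<in> Inv \<and>
             real (recolorings S c c') \<le> insB (card S)) \<and>
        (\<forall>x \<in> S. \<exists>c'. (S - {x}, c') \<in> Inv \<and>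
             real (recolorings (S - {x}) c c') \<le> delB (card S)))"

end

theory Submission
  imports Defs "HOL-Library.Product_Lexorder" "HOL-Library.Countable" "HOL-Library.Log_Nat"
begin

text \<open>
  Every object carries a colour \<open>(slot, c)\<close>, ordered lexicographically: \<open>c\<close> is its colour in a
  unimax colouring of some group of objects, and groups with larger slots dominate.  A union of
  groups with pairwise distinct slots is then unimax, hence conflict-free after an injective
  recoding of the colours into \<open>nat\<close>.

  Insertions are handled by the logarithmic method: recently inserted objects form blocks of
  sizes \<open>2^j\<close> (a binary counter), and a carry merges blocks \<open>0, \<dots>, m-1\<close> together with the
  new object into a block of level \<open>m\<close>, coloured freshly with a new, larger slot.  To keep the
  worst-case cost at \<open>O(log n)\<close>, the new colouring is not applied at once: it is laid over
  the old colouring, and only an upper set (with respect to the new colouring) of the objects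
  has been moved to it.  Such an overlay is still unimax, and each update moves two more
  objects of every block, which finishes a block before it takes part in the next carry.

  Deletions are weak deletions inside each of the \<open>O(1)\<close> groups containing the object, plus a
  repair of the moved upper sets, costing \<open>O(r(n) + 1)\<close>.  Since weak deletions never shrink
  the ground set of a group, the whole structure is rebuilt every \<open>n\<^sub>0/16\<close> updates, where
  \<open>n\<^sub>0\<close> is the size at the start of the epoch: the current set becomes one big group laid over
  the previous structure and is moved to its new colouring 16 objects per update.
\<close>

section \<open>Unimax colourings with values in a linear order\<close>

definition unique_max :: "('o \<Rightarrow> 'a::linorder) \<Rightarrow> 'o set \<Rightarrow> bool" where
  "unique_max f Q \<longleftrightarrow> (\<exists>s\<in>Q. \<forall>t\<in>Q. t \<noteq> s \<longrightarrow> f t < f s)"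

definition unimax_ord :: "('q \<Rightarrow> 'o \<Rightarrow> bool) \<Rightarrow> 'o set \<Rightarrow> ('o \<Rightarrow> 'a::linorder) \<Rightarrow> bool" where
  "unimax_ord rel S f \<longleftrightarrow> (\<forall>q. rel_set rel S q \<noteq> {} \<longrightarrow> unique_max f (rel_set rel S q))"

lemma unimax_ord_iff_unimax: "unimax_ord rel S c \<longleftrightarrow> unimax rel S c"
  by (simp add: unimax_ord_def unimax_def unique_max_def)

lemma rel_set_Un: "rel_set rel (A \<union> B) q = rel_set rel A q \<union> rel_set rel B q"
  unfolding rel_set_def by auto

lemma rel_set_subset: "rel_set rel A q \<subseteq> A"
  unfolding rel_set_def by auto

lemma unique_max_cong: "(\<And>x. x \<in> Q \<Longrightarrow> f x = g x) \<Longrightarrow> unique_max f Q \<longleftrightarrow> unique_max g Q"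
  unfolding unique_max_def by (metis (no_types, lifting))

lemma unimax_ord_cong:
  "(\<And>x. x \<in> S \<Longrightarrow> f x = g x) \<Longrightarrow> unimax_ord rel S f \<longleftrightarrow> unimax_ord rel S g"
  unfolding unimax_ord_def using unique_max_cong[of "rel_set rel S _" f g] rel_set_subset
  by (metis subsetD)

lemma unique_max_comp_strict_mono:
  "strict_mono h \<Longrightarrow> unique_max g Q \<Longrightarrow> unique_max (h \<circ> g) Q"
  unfolding unique_max_def by (auto dest: strict_monoD)

lemma unique_max_Un:
  assumes A: "unique_max f A" and B: "unique_max f B" and disj: "f ` A \<inter> f ` B = {}"
  shows "unique_max f (A \<union> B)"
proof -
  obtain a where a: "a \<in> A" "\<forall>t\<in>A. t \<noteq> a \<longrightarrow> f t < f a"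
    using A unfolding unique_max_def by blast
  obtain b where b: "b \<in> B" "\<forall>t\<in>B. t \<noteq> b \<longrightarrow> f t < f b"
    using B unfolding unique_max_def by blast
  have "f a \<noteq> f b" using a(1) b(1) disj by blast
  then consider "f b < f a" | "f a < f b" by (meson linorder_neqE)
  then show ?thesis
  proof cases
    case 1
    have "f t < f a" if "t \<in> A \<union> B" "t \<noteq> a" for t
      using that a b 1 by (cases "t \<in> A"; cases "t = b") (auto dest: order.strict_trans)
    then show ?thesis unfolding unique_max_def using a(1) by blast
  next
    case 2
    have "f t < f b" if "t \<in> A \<union> B" "t \<noteq> b" for t
      using that a b 2 by (cases "t \<in> B"; cases "t = a") (auto dest: order.strict_trans)
    then show ?thesis unfolding unique_max_def using b(1) by blast
  qed
qed

lemma unimax_ord_Un: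
  assumes A: "unimax_ord rel A f" and B: "unimax_ord rel B f" and disj: "f ` A \<inter> f ` B = {}"
  shows "unimax_ord rel (A \<union> B) f"
  unfolding unimax_ord_def rel_set_Un
proof (intro allI impI)
  fix q
  let ?A = "rel_set rel A q" and ?B = "rel_set rel B q"
  assume ne: "?A \<union> ?B \<noteq> {}"
  have uA: "?A \<noteq> {} \<Longrightarrow> unique_max f ?A" and uB: "?B \<noteq> {} \<Longrightarrow> unique_max f ?B"
    using A B unfolding unimax_ord_def by blast+
  have "f ` ?A \<subseteq> f ` A" "f ` ?B \<subseteq> f ` B"
    by (intro image_mono rel_set_subset)+
  then have disj_q: "f ` ?A \<inter> f ` ?B = {}"
    using disj by blast
  show "unique_max f (?A \<union> ?B)"
  proof (cases "?A = {}")
    case True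
    then show ?thesis using uB ne by simp
  next
    case False
    then show ?thesis using uA uB unique_max_Un[OF _ _ disj_q] by (cases "?B = {}") auto
  qed
qed

definition upper_set :: "('o \<Rightarrow> 'a::linorder) \<Rightarrow> 'o set \<Rightarrow> 'o set \<Rightarrow> bool" where
  "upper_set c G V \<longleftrightarrow> (\<forall>y\<in>G - V. \<forall>v\<in>V. c y \<le> c v)"

text \<open>An object of the upper set \<open>V\<close> of \<open>g\<close> that is present in \<open>Q\<close> forces the \<open>g\<close>-maximum of
  \<open>Q\<close> into \<open>V\<close>, where the overlay colours exceed all others.\<close>
lemma unique_max_overlay:
  fixes f :: "'o \<Rightarrow> nat \<times> 'b::linorder"
  assumes f: "unique_max f Q" and g: "unique_max g Q" and QS: "Q \<subseteq> S"
    and up: "upper_set g S V" and below: "\<forall>x\<in>S. fst (f x) < s"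
  shows "unique_max (\<lambda>x. if x \<in> V then (s, g x) else f x) Q"
proof (cases "Q \<inter> V = {}")
  case True
  then have "unique_max (\<lambda>x. if x \<in> V then (s, g x) else f x) Q \<longleftrightarrow> unique_max f Q"
    by (intro unique_max_cong) auto
  then show ?thesis using f by simp
next
  case False
  then obtain v where v: "v \<in> Q" "v \<in> V" by blast
  obtain m where m: "m \<in> Q" "\<forall>t\<in>Q. t \<noteq> m \<longrightarrow> g t < g m"
    using g unfolding unique_max_def by blast
  have mV: "m \<in> V"
  proof (rule ccontr)
    assume "m \<notin> V"
    then have "g m \<le> g v" using up m(1) v QS unfolding upper_set_def by blast
    moreover have "v \<noteq> m" using v \<open>m \<notin> V\<close> by blast
    then have "g v < g m" using m v by blast
    ultimately show False by simp
  qed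
  have "(if t \<in> V then (s, g t) else f t) < (s, g m)" if "t \<in> Q" "t \<noteq> m" for t
  proof (cases "t \<in> V")
    case False
    then show ?thesis using below that QS by (auto simp: less_prod_def)
  qed (use m that in auto)
  then show ?thesis unfolding unique_max_def using m(1) mV by (intro bexI[of _ m]) auto
qed

lemma unimax_ord_conflict_free:
  assumes "unimax_ord rel S f" "inj h"
  shows "conflict_free rel S (h \<circ> f)"
  unfolding conflict_free_def
proof (intro allI impI)
  fix q
  assume "rel_set rel S q \<noteq> {}"
  then obtain s where s: "s \<in> rel_set rel S q" "\<forall>t\<in>rel_set rel S q. t \<noteq> s \<longrightarrow> f t < f s"
    using assms(1) unfolding unimax_ord_def unique_max_def by auto
  have "\<forall>t\<in>rel_set rel S q. t \<noteq> s \<longrightarrow> (h \<circ> f) t \<noteq> (h \<circ> f) s"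
  proof (intro ballI impI)
    fix t assume "t \<in> rel_set rel S q" "t \<noteq> s"
    then have "f t \<noteq> f s" using s by force
    then show "(h \<circ> f) t \<noteq> (h \<circ> f) s" using assms(2) by (auto dest: injD)
  qed
  then show "\<exists>s\<in>rel_set rel S q. \<forall>t\<in>rel_set rel S q. t \<noteq> s \<longrightarrow> (h \<circ> f) t \<noteq> (h \<circ> f) s"
    using s by blast
qed

section \<open>States reachable by weak deletions\<close>

definition wd_invariant ::
  "('q \<Rightarrow> 'o \<Rightarrow> bool) \<Rightarrow> (nat \<Rightarrow> nat) \<Rightarrow> (nat \<Rightarrow> nat) \<Rightarrow> 'o set \<Rightarrow> ('o set \<times> ('o \<Rightarrow> int)) set \<Rightarrow> bool"
  where
  "wd_invariant rel \<gamma> r T Inv \<longleftrightarrow> (\<forall>(S, c) \<in> Inv.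
     S \<subseteq> T \<and> unimax rel S c \<and> card (c ` S) \<le> \<gamma> (card T) \<and>
     (\<forall>x\<in>S. \<exists>c'. (S - {x}, c') \<in> Inv \<and> recolorings (S - {x}) c c' \<le> r (card T)))"

definition wd_reachable ::
  "('q \<Rightarrow> 'o \<Rightarrow> bool) \<Rightarrow> (nat \<Rightarrow> nat) \<Rightarrow> (nat \<Rightarrow> nat) \<Rightarrow> 'o set \<Rightarrow> 'o set \<Rightarrow> ('o \<Rightarrow> int) \<Rightarrow> bool"
  where
  "wd_reachable rel \<gamma> r T S c \<longleftrightarrow> finite T \<and> (\<exists>Inv. wd_invariant rel \<gamma> r T Inv \<and> (S, c) \<in> Inv)"

lemma wd_reachableD:
  assumes "wd_reachable rel \<gamma> r T S c"
  shows "finite T" "S \<subseteq> T" "finite S" "unimax rel S c" "card (c ` S) \<le> \<gamma> (card T)"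
proof -
  from assms obtain Inv where "finite T" "wd_invariant rel \<gamma> r T Inv" "(S, c) \<in> Inv"
    unfolding wd_reachable_def by blast
  then show "finite T" "S \<subseteq> T" "unimax rel S c" "card (c ` S) \<le> \<gamma> (card T)"
    unfolding wd_invariant_def by auto
  then show "finite S" using finite_subset by blast
qed

lemma wd_reachable_delete:
  assumes "wd_reachable rel \<gamma> r T S c" "x \<in> S"
  shows "\<exists>c'. wd_reachable rel \<gamma> r T (S - {x}) c' \<and> card {y \<in> S - {x}. c' y \<noteq> c y} \<le> r (card T)"
proof -
  from assms obtain Inv where I: "finite T" "wd_invariant rel \<gamma> r T Inv" "(S, c) \<in> Inv"
    unfolding wd_reachable_def by blast
  then obtain c' where "(S - {x}, c') \<in> Inv" "recolorings (S - {x}) c c' \<le> r (card T)"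
    using assms(2) unfolding wd_invariant_def by blast
  then show ?thesis using I unfolding wd_reachable_def recolorings_def by blast
qed

lemma allows_weak_deletions_reachable:
  "finite T \<Longrightarrow> allows_weak_deletions rel \<gamma> r T c \<Longrightarrow> wd_reachable rel \<gamma> r T T c"
  unfolding wd_reachable_def allows_weak_deletions_def wd_invariant_def by blast

section \<open>Moving an upper set up a colouring\<close>

text \<open>\<open>migrate c G k V\<close> adds the \<open>k\<close> largest objects of \<open>G - V\<close> (with respect to \<open>c\<close>) to \<open>V\<close>;
  \<open>repair_upper c c' G V\<close> turns a \<open>c\<close>-upper set into a \<open>c'\<close>-upper set, changing only objects
  whose colour changed.\<close>
definition migrate_one :: "('o \<Rightarrow> 'a::linorder) \<Rightarrow> 'o set \<Rightarrow> 'o set \<Rightarrow> 'o set" where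
  "migrate_one c G V =
     (if G - V = {} then V else insert (SOME m. m \<in> G - V \<and> (\<forall>y\<in>G - V. c y \<le> c m)) V)"

definition migrate :: "('o \<Rightarrow> 'a::linorder) \<Rightarrow> 'o set \<Rightarrow> nat \<Rightarrow> 'o set \<Rightarrow> 'o set" where
  "migrate c G k V = (migrate_one c G ^^ k) V"

definition repair_upper :: "('o \<Rightarrow> 'a::linorder) \<Rightarrow> ('o \<Rightarrow> 'a) \<Rightarrow> 'o set \<Rightarrow> 'o set \<Rightarrow> 'o set" where
  "repair_upper c c' G V = (let V0 = {v \<in> V. v \<in> G \<and> c' v = c v} in
     if V0 = {} then {} else V0 \<union> {z \<in> G. Min (c' ` V0) < c' z})"

lemma finite_ex_max_image:
  fixes c :: "'o \<Rightarrow> 'a::linorder"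
  assumes "finite A" "A \<noteq> {}"
  shows "\<exists>m. m \<in> A \<and> (\<forall>y\<in>A. c y \<le> c m)"
proof -
  have "Max (c ` A) \<in> c ` A" using assms by simp
  then obtain m where "m \<in> A" "c m = Max (c ` A)" by auto
  then show ?thesis using assms by auto
qed

lemma migrate_one_props:
  assumes "finite G" "V \<subseteq> G" "upper_set c G V"
  shows "V \<subseteq> migrate_one c G V" "migrate_one c G V \<subseteq> G" "upper_set c G (migrate_one c G V)"
    "card (migrate_one c G V - V) \<le> 1" "card (G - migrate_one c G V) = card (G - V) - 1"
proof -
  have "V \<subseteq> migrate_one c G V \<and> migrate_one c G V \<subseteq> G \<and> upper_set c G (migrate_one c G V) \<and>
    card (migrate_one c G V - V) \<le> 1 \<and> card (G - migrate_one c G V) = card (G - V) - 1"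
  proof (cases "G - V = {}")
    case True
    then show ?thesis using assms unfolding migrate_one_def by simp
  next
    case False
    have fin: "finite (G - V)" using assms by simp
    define m where "m = (SOME m. m \<in> G - V \<and> (\<forall>y\<in>G - V. c y \<le> c m))"
    have m: "m \<in> G - V \<and> (\<forall>y\<in>G - V. c y \<le> c m)"
      unfolding m_def by (rule someI_ex) (rule finite_ex_max_image[OF fin False])
    have e: "migrate_one c G V = insert m V" using False unfolding migrate_one_def m_def by simp
    have "upper_set c G (insert m V)" using assms(3) m unfolding upper_set_def by auto
    moreover have "card (insert m V - V) \<le> 1"
      using card_mono[of "{m}" "insert m V - V"] by fastforce
    moreover have "G - insert m V = (G - V) - {m}" by auto
    then have "card (G - insert m V) = card (G - V) - 1" using m fin by simp
    ultimately show ?thesis using e m assms(2) by auto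
  qed
  then show "V \<subseteq> migrate_one c G V" "migrate_one c G V \<subseteq> G" "upper_set c G (migrate_one c G V)"
    "card (migrate_one c G V - V) \<le> 1" "card (G - migrate_one c G V) = card (G - V) - 1" by auto
qed

lemma migrate_props:
  assumes "finite G" "V \<subseteq> G" "upper_set c G V"
  shows "V \<subseteq> migrate c G k V \<and> migrate c G k V \<subseteq> G \<and> upper_set c G (migrate c G k V) \<and>
    card (migrate c G k V - V) \<le> k \<and> card (G - migrate c G k V) = card (G - V) - k"
proof (induction k)
  case 0
  then show ?case using assms unfolding migrate_def by simp
next
  case (Suc k)
  let ?W = "migrate c G k V"
  have W: "V \<subseteq> ?W" "?W \<subseteq> G" "upper_set c G ?W" "card (?W - V) \<le> k"
    "card (G - ?W) = card (G - V) - k"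
    using Suc by auto
  have e: "migrate c G (Suc k) V = migrate_one c G ?W" unfolding migrate_def by simp
  note P = migrate_one_props[OF assms(1) W(2) W(3)]
  have "migrate_one c G ?W - V \<subseteq> (migrate_one c G ?W - ?W) \<union> (?W - V)" by auto
  moreover have "finite (migrate_one c G ?W - ?W)" "finite (?W - V)" using assms(1) P(2) W(2)
    by (auto intro: finite_subset)
  ultimately have "card (migrate_one c G ?W - V) \<le> card (migrate_one c G ?W - ?W) + card (?W - V)"
    by (meson card_Un_le card_mono finite_UnI le_trans)
  then have "card (migrate_one c G ?W - V) \<le> Suc k" using P(4) W(4) by simp
  then show ?case using e P W by auto
qed

lemma migrate_full: "migrate c G k G = G"
proof -
  have "migrate_one c G G = G" unfolding migrate_one_def by simp
  then show ?thesis unfolding migrate_def by (induction k) auto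
qed

lemma repair_upper_props:
  assumes fin: "finite G" and VG: "V \<subseteq> G" and up: "upper_set c G V"
  shows "repair_upper c c' G V \<subseteq> G" "upper_set c' G (repair_upper c c' G V)"
    "repair_upper c c' G V - V \<subseteq> {y \<in> G. c' y \<noteq> c y}"
    "V - repair_upper c c' G V \<subseteq> {y \<in> G. c' y \<noteq> c y}"
proof -
  define V0 where "V0 = {v \<in> V. v \<in> G \<and> c' v = c v}"
  define W where "W = repair_upper c c' G V"
  have "W \<subseteq> G \<and> upper_set c' G W \<and> W - V \<subseteq> {y \<in> G. c' y \<noteq> c y} \<and> V0 \<subseteq> W"
  proof (cases "V0 = {}")
    case True
    then show ?thesis unfolding W_def repair_upper_def V0_def upper_set_def Let_def by simp
  next
    case False
    define m where "m = Min (c' ` V0)"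
    have finV0: "finite V0" using fin VG unfolding V0_def by (auto intro: finite_subset)
    have W: "W = V0 \<union> {z \<in> G. m < c' z}"
      unfolding W_def repair_upper_def Let_def V0_def[symmetric] m_def[symmetric] using False by simp
    have m_le: "m \<le> c' v" if "v \<in> V0" for v unfolding m_def using finV0 that by simp
    have "m \<in> c' ` V0" unfolding m_def using finV0 False by simp
    then obtain v0 where v0: "v0 \<in> V" "c' v0 = m" "c v0 = m" unfolding V0_def by auto
    have "c' y \<le> c' v" if "y \<in> G - W" "v \<in> W" for y v
    proof -
      have "c' y \<le> m" using that(1) unfolding W by auto
      also have "m \<le> c' v" using that(2) m_le unfolding W by force
      finally show ?thesis .
    qed
    then have "upper_set c' G W" unfolding upper_set_def by blast
    moreover have "c' z \<noteq> c z" if "z \<in> G" "z \<notin> V" "m < c' z" for z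
    proof -
      have "c z \<le> c v0" using up that(1,2) v0(1) unfolding upper_set_def by blast
      then show ?thesis using v0(3) that(3) by simp
    qed
    then have "W - V \<subseteq> {y \<in> G. c' y \<noteq> c y}" unfolding W V0_def by auto
    moreover have "W \<subseteq> G" unfolding W V0_def by auto
    ultimately show ?thesis unfolding W by blast
  qed
  moreover have "V - V0 \<subseteq> {y \<in> G. c' y \<noteq> c y}" using VG unfolding V0_def by auto
  ultimately show "repair_upper c c' G V \<subseteq> G" "upper_set c' G (repair_upper c c' G V)"
    "repair_upper c c' G V - V \<subseteq> {y \<in> G. c' y \<noteq> c y}"
    "V - repair_upper c c' G V \<subseteq> {y \<in> G. c' y \<noteq> c y}"
    unfolding W_def by blast+
qed

lemma upper_set_empty [simp]: "upper_set c G {}"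
  unfolding upper_set_def by simp

lemma upper_set_Diff: "upper_set c G V \<Longrightarrow> upper_set c (G - {x}) (V - {x})"
  unfolding upper_set_def by auto

lemma card_le_if_subset_Un: "finite A \<Longrightarrow> finite B \<Longrightarrow> X \<subseteq> A \<union> B \<Longrightarrow> card X \<le> card A + card B"
  by (meson card_Un_le card_mono finite_UnI le_trans)

text \<open>The repair drops only recoloured objects from the moved set; moving on by their number plus 16
  lets every deletion still advance the migration by 16 objects.\<close>
definition update_moved :: "('o \<Rightarrow> 'a::linorder) \<Rightarrow> ('o \<Rightarrow> 'a) \<Rightarrow> 'o set \<Rightarrow> 'o set \<Rightarrow> 'o set" where
  "update_moved c c' G V = migrate c' G (card {y \<in> G. c' y \<noteq> c y} + 16) (repair_upper c c' G V)"

lemma update_moved_props: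
  fixes c c' :: "'o \<Rightarrow> 'a::linorder"
  assumes fin: "finite G" and VG: "V \<subseteq> G" and up: "upper_set c G V"
  defines "R \<equiv> {y \<in> G. c' y \<noteq> c y}" and "W \<equiv> update_moved c c' G V"
  shows "W \<subseteq> G" "upper_set c' G W" "card (G - W) \<le> card (G - V) - 16"
    "card ((W - V) \<union> (V - W) \<union> R) \<le> 2 * card R + 16"
proof -
  define V1 where "V1 = repair_upper c c' G V"
  note F = repair_upper_props[OF fin VG up, of c', folded V1_def R_def]
  have W: "W = migrate c' G (card R + 16) V1" unfolding W_def update_moved_def V1_def R_def ..
  have M: "V1 \<subseteq> W" "W \<subseteq> G" "upper_set c' G W" "card (W - V1) \<le> card R + 16"
    "card (G - W) = card (G - V1) - (card R + 16)"
    using migrate_props[OF fin F(1) F(2), of "card R + 16"] by (simp_all add: W)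
  show "W \<subseteq> G" "upper_set c' G W" using M by simp_all
  have finR: "finite R" using fin unfolding R_def by simp
  have "G - V1 \<subseteq> (G - V) \<union> R" using F(4) by auto
  then have "card (G - V1) \<le> card (G - V) + card R"
    using fin finR by (intro card_le_if_subset_Un) auto
  then show "card (G - W) \<le> card (G - V) - 16" using M(5) by simp
  have "(W - V) \<union> (V - W) \<union> R \<subseteq> R \<union> (W - V1)" using F(3,4) M(1) by auto
  then have "card ((W - V) \<union> (V - W) \<union> R) \<le> card R + card (W - V1)"
    using fin finR M(2) by (intro card_le_if_subset_Un) (auto intro: finite_subset)
  then show "card ((W - V) \<union> (V - W) \<union> R) \<le> 2 * card R + 16" using M(4) by simp
qed

lemma unimax_ord_comp_strict_mono:
  "unimax_ord rel S g \<Longrightarrow> strict_mono h \<Longrightarrow> unimax_ord rel S (h \<circ> g)"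
  unfolding unimax_ord_def by (simp add: unique_max_comp_strict_mono)

lemma unimax_ord_overlay:
  fixes f :: "'o \<Rightarrow> nat \<times> 'b::linorder"
  assumes "unimax_ord rel S f" "unimax_ord rel S g" "upper_set g S V" "\<forall>x\<in>S. fst (f x) < s"
  shows "unimax_ord rel S (\<lambda>x. if x \<in> V then (s, g x) else f x)"
  unfolding unimax_ord_def
proof (intro allI impI)
  fix q
  assume "rel_set rel S q \<noteq> {}"
  with assms show "unique_max (\<lambda>x. if x \<in> V then (s, g x) else f x) (rel_set rel S q)"
    unfolding unimax_ord_def by (intro unique_max_overlay[OF _ _ rel_set_subset]) auto
qed

section \<open>Configurations\<close>

text \<open>A coloured group: \<open>cg_col\<close> colours the current objects \<open>cg_set\<close> and is reached by weak
  deletions from a unimax colouring of the ground set \<open>cg_base\<close>.\<close>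
datatype 'o cgroup = CGroup (cg_base: "'o set") (cg_set: "'o set") (cg_col: "'o \<Rightarrow> int") (cg_slot: nat)

text \<open>In \<open>Overlay a g V\<close> the groups \<open>a\<close> and \<open>g\<close> have the same objects; those in \<open>V\<close> already
  use the colours of \<open>g\<close>, the others still those of \<open>a\<close>.\<close>
datatype 'o cfg = Empty | Leaf "'o cgroup" | Join "'o cfg" "'o cfg"
  | Overlay "'o cfg" "'o cgroup" "'o set"

fun objects :: "'o cfg \<Rightarrow> 'o set" where
  "objects Empty = {}"
| "objects (Leaf g) = cg_set g"
| "objects (Join a b) = objects a \<union> objects b"
| "objects (Overlay a g V) = objects a"

fun colour :: "'o cfg \<Rightarrow> 'o \<Rightarrow> nat \<times> int" where
  "colour Empty x = (0, 0)"
| "colour (Leaf g) x = (cg_slot g, cg_col g x)"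
| "colour (Join a b) x = (if x \<in> objects a then colour a x else colour b x)"
| "colour (Overlay a g V) x = (if x \<in> V then (cg_slot g, cg_col g x) else colour a x)"

fun slots :: "'o cfg \<Rightarrow> nat set" where
  "slots Empty = {}"
| "slots (Leaf g) = {cg_slot g}"
| "slots (Join a b) = slots a \<union> slots b"
| "slots (Overlay a g V) = insert (cg_slot g) (slots a)"

fun groups :: "'o cfg \<Rightarrow> 'o cgroup list" where
  "groups Empty = []"
| "groups (Leaf g) = [g]"
| "groups (Join a b) = groups a @ groups b"
| "groups (Overlay a g V) = g # groups a"

fun height :: "'o cfg \<Rightarrow> nat" where
  "height Empty = 0"
| "height (Leaf g) = 1"
| "height (Join a b) = max (height a) (height b)"
| "height (Overlay a g V) = Suc (height a)"

definition occurrences :: "'o \<Rightarrow> 'o cfg \<Rightarrow> nat" where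
  "occurrences x cf = length (filter (\<lambda>g. x \<in> cg_set g) (groups cf))"

definition bases_le :: "nat \<Rightarrow> 'o cfg \<Rightarrow> bool" where
  "bases_le M cf \<longleftrightarrow> (\<forall>g\<in>set (groups cf). card (cg_base g) \<le> M)"

fun unmigrated :: "'o cfg \<Rightarrow> nat" where
  "unmigrated (Overlay a g V) = card (cg_set g - V)"
| "unmigrated _ = 0"

fun migrate_cfg :: "nat \<Rightarrow> 'o cfg \<Rightarrow> 'o cfg" where
  "migrate_cfg k (Overlay a g V) = Overlay a g (migrate (cg_col g) (cg_set g) k V)"
| "migrate_cfg k cf = cf"

lemma colour_slot: "x \<in> objects cf \<Longrightarrow> fst (colour cf x) \<in> slots cf"
  by (induction cf) auto

locale cf_setting =
  fixes rel :: "'q \<Rightarrow> 'o \<Rightarrow> bool" and F :: "'o set" and \<gamma> r :: "nat \<Rightarrow> nat"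
  assumes mono_gamma: "mono \<gamma>" and mono_r: "mono r"
    and weak_deletions: "\<And>S0. finite S0 \<Longrightarrow> S0 \<subseteq> F \<Longrightarrow> \<exists>c0. allows_weak_deletions rel \<gamma> r S0 c0"
begin

abbreviation reachable :: "'o set \<Rightarrow> 'o set \<Rightarrow> ('o \<Rightarrow> int) \<Rightarrow> bool" where
  "reachable \<equiv> wd_reachable rel \<gamma> r"

abbreviation good_group :: "'o cgroup \<Rightarrow> bool" where
  "good_group g \<equiv> reachable (cg_base g) (cg_set g) (cg_col g)"

fun valid_cfg :: "'o cfg \<Rightarrow> bool" where
  "valid_cfg Empty = True"
| "valid_cfg (Leaf g) = good_group g"
| "valid_cfg (Join a b) =
     (valid_cfg a \<and> valid_cfg b \<and> objects a \<inter> objects b = {} \<and> slots a \<inter> slots b = {})"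
| "valid_cfg (Overlay a g V) = (valid_cfg a \<and> good_group g \<and> cg_set g = objects a \<and> V \<subseteq> cg_set g \<and>
     upper_set (cg_col g) (cg_set g) V \<and> (\<forall>s\<in>slots a. s < cg_slot g))"

definition budget :: "'o cfg \<Rightarrow> nat" where
  "budget cf = sum_list (map (\<lambda>g. \<gamma> (card (cg_base g))) (groups cf))"

lemma valid_finite: "valid_cfg cf \<Longrightarrow> finite (objects cf)"
  by (induction cf) (auto dest: wd_reachableD)

lemma valid_unimax: "valid_cfg cf \<Longrightarrow> unimax_ord rel (objects cf) (colour cf)"
proof (induction cf)
  case Empty
  then show ?case unfolding unimax_ord_def rel_set_def by auto
next
  case (Leaf g)
  then have "unimax_ord rel (cg_set g) (cg_col g)"
    by (auto simp: unimax_ord_iff_unimax dest: wd_reachableD(4))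
  moreover have "strict_mono (Pair (cg_slot g) :: int \<Rightarrow> nat \<times> int)"
    by (simp add: strict_mono_def)
  ultimately have "unimax_ord rel (cg_set g) (Pair (cg_slot g) \<circ> cg_col g)"
    by (rule unimax_ord_comp_strict_mono)
  then show ?case by (simp add: comp_def)
next
  case (Join a b)
  then have va: "valid_cfg a" "valid_cfg b" and disj: "objects a \<inter> objects b = {}"
    and sd: "slots a \<inter> slots b = {}" by auto
  have "unimax_ord rel (objects a) (colour (Join a b)) \<longleftrightarrow> unimax_ord rel (objects a) (colour a)"
    by (rule unimax_ord_cong) simp
  moreover have "unimax_ord rel (objects b) (colour (Join a b)) \<longleftrightarrow> unimax_ord rel (objects b) (colour b)"
    by (rule unimax_ord_cong) (use disj in auto)
  moreover have "colour (Join a b) x \<noteq> colour (Join a b) y" if "x \<in> objects a" "y \<in> objects b" for x y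
  proof -
    have "colour (Join a b) x = colour a x" "colour (Join a b) y = colour b y"
      using that disj by auto
    moreover have "fst (colour a x) \<in> slots a" "fst (colour b y) \<in> slots b"
      using that by (simp_all add: colour_slot)
    ultimately show ?thesis using sd by (metis disjoint_iff)
  qed
  then have "colour (Join a b) ` objects a \<inter> colour (Join a b) ` objects b = {}"
    by blast
  ultimately have "unimax_ord rel (objects a \<union> objects b) (colour (Join a b))"
    using Join.IH va by (intro unimax_ord_Un) simp_all
  then show ?case by (simp only: objects.simps)
next
  case (Overlay a g V)
  then have "unimax_ord rel (objects a) (colour a)" "unimax_ord rel (objects a) (cg_col g)"
    "upper_set (cg_col g) (objects a) V" "\<forall>x\<in>objects a. fst (colour a x) < cg_slot g"
    by (auto simp: unimax_ord_iff_unimax dest: wd_reachableD(4) colour_slot)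
  then show ?case using unimax_ord_overlay[of rel "objects a" "colour a" "cg_col g" V "cg_slot g"]
    by simp
qed

end

context cf_setting begin

lemma valid_groups: "valid_cfg cf \<Longrightarrow> g \<in> set (groups cf) \<Longrightarrow> good_group g \<and> cg_set g \<subseteq> objects cf"
  by (induction cf) auto

lemma card_colours_le_budget: "valid_cfg cf \<Longrightarrow> card (colour cf ` objects cf) \<le> budget cf"
proof (induction cf)
  case Empty
  then show ?case by (simp add: budget_def)
next
  case (Leaf g)
  then have "finite (cg_set g)" "card (cg_col g ` cg_set g) \<le> \<gamma> (card (cg_base g))"
    by (auto dest: wd_reachableD)
  moreover have "colour (Leaf g) ` objects (Leaf g) = Pair (cg_slot g) ` cg_col g ` cg_set g" by auto
  ultimately show ?case by (simp add: budget_def card_image inj_on_def)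
next
  case (Join a b)
  then have "colour (Join a b) ` objects (Join a b) \<subseteq> colour a ` objects a \<union> colour b ` objects b"
    by auto
  then have "card (colour (Join a b) ` objects (Join a b)) \<le> card (colour a ` objects a) + card (colour b ` objects b)"
    using Join.prems valid_finite by (intro card_le_if_subset_Un) auto
  then show ?case using Join by (simp add: budget_def)
next
  case (Overlay a g V)
  then have fin: "finite (cg_set g)" and col: "card (cg_col g ` cg_set g) \<le> \<gamma> (card (cg_base g))"
    by (auto dest: wd_reachableD)
  have "colour (Overlay a g V) ` objects (Overlay a g V) \<subseteq> Pair (cg_slot g) ` cg_col g ` cg_set g \<union> colour a ` objects a"
    using Overlay.prems by auto
  then have "card (colour (Overlay a g V) ` objects (Overlay a g V))
      \<le> card (Pair (cg_slot g) ` cg_col g ` cg_set g) + card (colour a ` objects a)"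
    using Overlay.prems valid_finite fin by (intro card_le_if_subset_Un) auto
  then show ?case using Overlay col by (simp add: budget_def card_image inj_on_def)
qed

lemma occurrences_le_height: "valid_cfg cf \<Longrightarrow> occurrences x cf \<le> height cf"
proof (induction cf)
  case (Join a b)
  have absent: "occurrences x c = 0" if "valid_cfg c" "x \<notin> objects c" for c
    using valid_groups[OF that(1)] that(2) unfolding occurrences_def by (auto simp: filter_empty_conv)
  have "occurrences x (Join a b) = occurrences x a + occurrences x b" unfolding occurrences_def by simp
  moreover have "x \<notin> objects a \<or> x \<notin> objects b" using Join.prems by auto
  ultimately show ?case using Join absent by auto
qed (auto simp: occurrences_def)

definition weak_delete :: "'o cgroup \<Rightarrow> 'o \<Rightarrow> 'o cgroup" where
  "weak_delete g x = (if x \<in> cg_set g then CGroup (cg_base g) (cg_set g - {x})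
     (SOME c'. reachable (cg_base g) (cg_set g - {x}) c' \<and>
        card {y \<in> cg_set g - {x}. c' y \<noteq> cg_col g y} \<le> r (card (cg_base g))) (cg_slot g)
     else g)"

lemma weak_delete_props:
  assumes "good_group g"
  shows "good_group (weak_delete g x)" "cg_base (weak_delete g x) = cg_base g"
    "cg_set (weak_delete g x) = cg_set g - {x}" "cg_slot (weak_delete g x) = cg_slot g"
    "card {y \<in> cg_set g - {x}. cg_col (weak_delete g x) y \<noteq> cg_col g y} \<le> r (card (cg_base g))"
    "x \<notin> cg_set g \<Longrightarrow> weak_delete g x = g"
proof -
  let ?P = "\<lambda>c'. reachable (cg_base g) (cg_set g - {x}) c' \<and>
    card {y \<in> cg_set g - {x}. c' y \<noteq> cg_col g y} \<le> r (card (cg_base g))"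
  have "?P (cg_col (weak_delete g x))"
  proof (cases "x \<in> cg_set g")
    case True
    then have "\<exists>c'. ?P c'" using wd_reachable_delete[OF assms] by blast
    then have "?P (SOME c'. ?P c')" by (rule someI_ex)
    then show ?thesis using True unfolding weak_delete_def by simp
  qed (use assms in \<open>simp add: weak_delete_def\<close>)
  then show "good_group (weak_delete g x)" "card {y \<in> cg_set g - {x}. cg_col (weak_delete g x) y \<noteq> cg_col g y}
      \<le> r (card (cg_base g))"
    by (auto simp: weak_delete_def)
  show "cg_base (weak_delete g x) = cg_base g" "cg_set (weak_delete g x) = cg_set g - {x}"
    "cg_slot (weak_delete g x) = cg_slot g" "x \<notin> cg_set g \<Longrightarrow> weak_delete g x = g"
    by (auto simp: weak_delete_def)
qed

fun cfg_delete :: "'o \<Rightarrow> 'o cfg \<Rightarrow> 'o cfg" where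
  "cfg_delete x Empty = Empty"
| "cfg_delete x (Leaf g) = Leaf (weak_delete g x)"
| "cfg_delete x (Join a b) = Join (cfg_delete x a) (cfg_delete x b)"
| "cfg_delete x (Overlay a g V) = (if x \<in> cg_set g then
     (let g' = weak_delete g x in
       Overlay (cfg_delete x a) g' (update_moved (cg_col g) (cg_col g') (cg_set g') (V - {x})))
     else Overlay (cfg_delete x a) g V)"

lemma cfg_delete_absent: "valid_cfg cf \<Longrightarrow> x \<notin> objects cf \<Longrightarrow> cfg_delete x cf = cf"
  by (induction cf) (auto simp: weak_delete_def)

lemma cfg_delete_Overlay:
  assumes "valid_cfg (Overlay a g V)" "x \<in> cg_set g"
  defines "g' \<equiv> weak_delete g x" 
    and "W \<equiv> update_moved (cg_col g) (cg_col (weak_delete g x)) (cg_set (weak_delete g x)) (V - {x})"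
  shows "cfg_delete x (Overlay a g V) = Overlay (cfg_delete x a) g' W"
    "good_group g'" "cg_base g' = cg_base g" "cg_set g' = cg_set g - {x}" "cg_slot g' = cg_slot g"
    "W \<subseteq> cg_set g'" "upper_set (cg_col g') (cg_set g') W" "card (cg_set g' - W) \<le> card (cg_set g - V) - 16"
    "card {y \<in> cg_set g'. (y \<in> W) \<noteq> (y \<in> V) \<or> cg_col g' y \<noteq> cg_col g y} \<le> 2 * r (card (cg_base g)) + 16"
proof -
  from assms(1) have g: "good_group g" and VG: "V \<subseteq> cg_set g" and up: "upper_set (cg_col g) (cg_set g) V"
    by auto
  note G' = weak_delete_props[OF g, of x, folded g'_def]
  show "cfg_delete x (Overlay a g V) = Overlay (cfg_delete x a) g' W"
    using assms(2) unfolding g'_def W_def by (simp add: Let_def)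
  show "good_group g'" "cg_base g' = cg_base g" "cg_set g' = cg_set g - {x}" "cg_slot g' = cg_slot g"
    by (fact G')+
  have fin: "finite (cg_set g')" using G'(1) by (rule wd_reachableD(3))
  have "V - {x} \<subseteq> cg_set g'" "upper_set (cg_col g) (cg_set g') (V - {x})"
    using VG upper_set_Diff[OF up] G'(3) by auto
  note U = update_moved_props[OF fin this, of "cg_col g'", folded W_def[folded g'_def]]
  show "W \<subseteq> cg_set g'" "upper_set (cg_col g') (cg_set g') W" by (fact U(1), fact U(2))
  have "card (cg_set g' - (V - {x})) \<le> card (cg_set g - V)"
    using G'(3) wd_reachableD(3)[OF g] by (intro card_mono) auto
  then show "card (cg_set g' - W) \<le> card (cg_set g - V) - 16" using U(3) by simp
  let ?R = "{y \<in> cg_set g'. cg_col g' y \<noteq> cg_col g y}"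
  have "{y \<in> cg_set g'. (y \<in> W) \<noteq> (y \<in> V) \<or> cg_col g' y \<noteq> cg_col g y}
      \<subseteq> (W - (V - {x})) \<union> ((V - {x}) - W) \<union> ?R"
    using G'(3) by auto
  moreover have "finite ((W - (V - {x})) \<union> ((V - {x}) - W) \<union> ?R)"
    using fin U(1) VG wd_reachableD(3)[OF g] by (auto intro: finite_subset)
  ultimately have "card {y \<in> cg_set g'. (y \<in> W) \<noteq> (y \<in> V) \<or> cg_col g' y \<noteq> cg_col g y}
      \<le> card ((W - (V - {x})) \<union> ((V - {x}) - W) \<union> ?R)"
    by (rule card_mono[rotated])
  also have "\<dots> \<le> 2 * r (card (cg_base g)) + 16" using U(4) G'(3,5) by simp
  finally show "card {y \<in> cg_set g'. (y \<in> W) \<noteq> (y \<in> V) \<or> cg_col g' y \<noteq> cg_col g y}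
      \<le> 2 * r (card (cg_base g)) + 16" .
qed

lemma cfg_delete_props:
  "valid_cfg cf \<Longrightarrow> valid_cfg (cfg_delete x cf) \<and> objects (cfg_delete x cf) = objects cf - {x} \<and>
     slots (cfg_delete x cf) = slots cf \<and> map cg_base (groups (cfg_delete x cf)) = map cg_base (groups cf) \<and>
     height (cfg_delete x cf) = height cf"
proof (induction cf)
  case (Leaf g)
  then show ?case using weak_delete_props[of g x] by simp
next
  case (Join a b)
  then show ?case by auto
next
  case (Overlay a g V)
  show ?case
  proof (cases "x \<in> cg_set g")
    case False
    then have "x \<notin> objects (Overlay a g V)" using Overlay.prems by simp
    moreover from this have "cfg_delete x (Overlay a g V) = Overlay a g V"
      by (rule cfg_delete_absent[OF Overlay.prems])
    ultimately show ?thesis using Overlay.prems by (simp del: valid_cfg.simps)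
  next
    case True
    note D = cfg_delete_Overlay[OF Overlay.prems True]
    have "valid_cfg (cfg_delete x a) \<and> objects (cfg_delete x a) = objects a - {x} \<and>
      slots (cfg_delete x a) = slots a \<and> map cg_base (groups (cfg_delete x a)) = map cg_base (groups a) \<and>
      height (cfg_delete x a) = height a"
      using Overlay by simp
    then show ?thesis using D Overlay.prems by auto
  qed
qed simp

lemma cfg_delete_recolour:
  "valid_cfg cf \<Longrightarrow> bases_le M cf \<Longrightarrow>
     card {y \<in> objects cf - {x}. colour (cfg_delete x cf) y \<noteq> colour cf y} \<le> occurrences x cf * (2 * r M + 16)"
proof (induction cf)
  case (Leaf g)
  show ?case
  proof (cases "x \<in> cg_set g")
    case True
    have "{y \<in> objects (Leaf g) - {x}. colour (cfg_delete x (Leaf g)) y \<noteq> colour (Leaf g) y}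
        = {y \<in> cg_set g - {x}. cg_col (weak_delete g x) y \<noteq> cg_col g y}"
      using weak_delete_props(4)[of g x] Leaf.prems by auto
    moreover have "r (card (cg_base g)) \<le> r M" using Leaf.prems mono_r by (simp add: bases_le_def monoD)
    ultimately show ?thesis using weak_delete_props(5)[of g x] Leaf.prems True by (simp add: occurrences_def)
  next
    case False
    then show ?thesis using weak_delete_props(6)[of g x] Leaf.prems by simp
  qed
next
  case (Join a b)
  let ?C = "\<lambda>cf. {y \<in> objects cf - {x}. colour (cfg_delete x cf) y \<noteq> colour cf y}"
  have "?C (Join a b) \<subseteq> ?C a \<union> ?C b" using cfg_delete_props[of a x] Join.prems by auto
  then have "card (?C (Join a b)) \<le> card (?C a) + card (?C b)"
    using Join.prems valid_finite by (intro card_le_if_subset_Un) auto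
  then show ?case using Join by (simp add: occurrences_def bases_le_def add_mult_distrib)
next
  case (Overlay a g V)
  let ?C = "\<lambda>cf. {y \<in> objects cf - {x}. colour (cfg_delete x cf) y \<noteq> colour cf y}"
  show ?case
  proof (cases "x \<in> cg_set g")
    case False
    then show ?thesis using cfg_delete_absent[OF Overlay.prems(1)] Overlay.prems(1) by simp
  next
    case True
    define g' where "g' = weak_delete g x"
    define W where "W = update_moved (cg_col g) (cg_col g') (cg_set g') (V - {x})"
    note D = cfg_delete_Overlay[OF Overlay.prems(1) True, folded g'_def W_def]
    let ?D = "{y \<in> cg_set g'. (y \<in> W) \<noteq> (y \<in> V) \<or> cg_col g' y \<noteq> cg_col g y}"
    have "?C (Overlay a g V) \<subseteq> ?C a \<union> ?D" using D(1,4,5) Overlay.prems(1) by auto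
    then have "card (?C (Overlay a g V)) \<le> card (?C a) + card ?D"
      using Overlay.prems(1) valid_finite wd_reachableD(3)[OF D(2)] by (intro card_le_if_subset_Un) auto
    moreover have "card (?C a) \<le> occurrences x a * (2 * r M + 16)"
      using Overlay by (simp add: bases_le_def)
    moreover have "r (card (cg_base g)) \<le> r M" using Overlay.prems(2) mono_r by (simp add: bases_le_def monoD)
    ultimately show ?thesis using D(9) True by (simp add: occurrences_def)
  qed
qed simp

lemma unmigrated_cfg_delete:
  assumes "valid_cfg cf"
  shows "unmigrated (cfg_delete x cf) \<le> unmigrated cf"
proof (cases cf)
  case (Overlay a g V)
  then show ?thesis using assms cfg_delete_Overlay[of a g V x] by (cases "x \<in> cg_set g") auto
qed (auto simp: weak_delete_def)

lemma migrate_cfg_props: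
  assumes "valid_cfg cf"
  shows "valid_cfg (migrate_cfg k cf)" "objects (migrate_cfg k cf) = objects cf"
    "slots (migrate_cfg k cf) = slots cf" "groups (migrate_cfg k cf) = groups cf"
    "height (migrate_cfg k cf) = height cf" "unmigrated (migrate_cfg k cf) = unmigrated cf - k"
    "card {y \<in> objects cf. colour (migrate_cfg k cf) y \<noteq> colour cf y} \<le> k"
proof -
  have "valid_cfg (migrate_cfg k cf) \<and> unmigrated (migrate_cfg k cf) = unmigrated cf - k \<and>
    card {y \<in> objects cf. colour (migrate_cfg k cf) y \<noteq> colour cf y} \<le> k"
  proof (cases cf)
    case (Overlay a g V)
    then have fin: "finite (cg_set g)" and VG: "V \<subseteq> cg_set g" and up: "upper_set (cg_col g) (cg_set g) V"
      using assms by (auto dest: wd_reachableD)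
    define W where "W = migrate (cg_col g) (cg_set g) k V"
    note M = migrate_props[OF fin VG up, of k, folded W_def]
    have "{y \<in> objects cf. colour (migrate_cfg k cf) y \<noteq> colour cf y} \<subseteq> W - V"
      using Overlay M unfolding W_def by auto
    then have "card {y \<in> objects cf. colour (migrate_cfg k cf) y \<noteq> colour cf y} \<le> k"
      using M fin by (meson card_mono finite_Diff finite_subset le_trans)
    then show ?thesis using Overlay assms M unfolding W_def by auto
  qed (use assms in auto)
  then show "valid_cfg (migrate_cfg k cf)" "unmigrated (migrate_cfg k cf) = unmigrated cf - k"
    "card {y \<in> objects cf. colour (migrate_cfg k cf) y \<noteq> colour cf y} \<le> k" by auto
  show "objects (migrate_cfg k cf) = objects cf" "slots (migrate_cfg k cf) = slots cf"
    "groups (migrate_cfg k cf) = groups cf" "height (migrate_cfg k cf) = height cf"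
    by (cases cf; simp)+
qed

end

section \<open>Blocks of the binary counter\<close>

text \<open>A list of blocks \<open>(j, b)\<close>: a block of level \<open>j\<close> holds at most \<open>2^j\<close> objects.\<close>
fun join_blocks :: "(nat \<times> 'o cfg) list \<Rightarrow> 'o cfg" where
  "join_blocks [] = Empty"
| "join_blocks ((j, b) # xs) = Join b (join_blocks xs)"

definition weight :: "(nat \<times> 'o cfg) list \<Rightarrow> nat" where
  "weight xs = (\<Sum>p\<leftarrow>xs. 2 ^ fst p)"

abbreviation levels_increasing :: "(nat \<times> 'o cfg) list \<Rightarrow> bool" where
  "levels_increasing \<equiv> sorted_wrt (\<lambda>p q. fst p < fst q)"

definition map_blocks :: "('o cfg \<Rightarrow> 'o cfg) \<Rightarrow> (nat \<times> 'o cfg) list \<Rightarrow> (nat \<times> 'o cfg) list" where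
  "map_blocks f = map (apsnd f)"

fun finished :: "'o cfg \<Rightarrow> bool" where
  "finished (Leaf g) = True"
| "finished (Overlay a g V) = (V = cg_set g)"
| "finished _ = False"

fun block_shaped :: "'o cfg \<Rightarrow> bool" where
  "block_shaped (Leaf g) = True"
| "block_shaped (Overlay a g V) = True"
| "block_shaped _ = False"

fun flatten :: "'o cfg \<Rightarrow> 'o cfg" where
  "flatten (Overlay a g V) = Leaf g"
| "flatten b = b"

fun split_run :: "nat \<Rightarrow> (nat \<times> 'o cfg) list \<Rightarrow> (nat \<times> 'o cfg) list \<times> (nat \<times> 'o cfg) list" where
  "split_run k [] = ([], [])"
| "split_run k ((j, b) # xs) =
     (if j = k then (let (p, q) = split_run (Suc k) xs in ((j, b) # p, q)) else ([], (j, b) # xs))"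

lemma join_blocks_append:
  "objects (join_blocks (p @ q)) = objects (join_blocks p) \<union> objects (join_blocks q)"
  "slots (join_blocks (p @ q)) = slots (join_blocks p) \<union> slots (join_blocks q)"
  "groups (join_blocks (p @ q)) = groups (join_blocks p) @ groups (join_blocks q)"
  by (induction p rule: join_blocks.induct) auto

lemma colour_join_blocks_append:
  "y \<in> objects (join_blocks p) \<Longrightarrow> colour (join_blocks (p @ q)) y = colour (join_blocks p) y"
  "y \<notin> objects (join_blocks p) \<Longrightarrow> colour (join_blocks (p @ q)) y = colour (join_blocks q) y"
  by (induction p rule: join_blocks.induct) (auto simp: join_blocks_append)

lemma groups_join_blocks: "g \<in> set (groups (join_blocks xs)) \<Longrightarrow> \<exists>pb\<in>set xs. g \<in> set (groups (snd pb))"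
  by (induction xs rule: join_blocks.induct) auto

lemma height_join_blocks: "\<forall>p\<in>set xs. height (snd p) \<le> h \<Longrightarrow> height (join_blocks xs) \<le> h"
  by (induction xs rule: join_blocks.induct) auto

lemma weight_Cons [simp]: "weight ((j, b) # xs) = 2 ^ j + weight xs"
  and weight_Nil [simp]: "weight [] = 0"
  and weight_append: "weight (p @ q) = weight p + weight q"
  and weight_map_blocks [simp]: "weight (map_blocks f xs) = weight xs"
  unfolding weight_def map_blocks_def by (simp_all add: comp_def)

lemma weight_ge: "(j, b) \<in> set xs \<Longrightarrow> 2 ^ j \<le> weight xs"
  by (induction xs) auto

lemma levels_increasing_map_blocks [simp]: "levels_increasing (map_blocks f xs) = levels_increasing xs"
  unfolding map_blocks_def by (simp add: sorted_wrt_map case_prod_beta)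

lemma map_blocks_Cons [simp]: "map_blocks f ((j, b) # xs) = (j, f b) # map_blocks f xs"
  and map_blocks_Nil [simp]: "map_blocks f [] = []"
  unfolding map_blocks_def by simp_all

lemma weight_lower_bound:
  "levels_increasing xs \<Longrightarrow> \<forall>p\<in>set xs. k \<le> fst p \<Longrightarrow> 2 ^ k * (2 ^ length xs - 1) \<le> weight xs"
proof (induction xs arbitrary: k)
  case (Cons a xs)
  obtain j b where a: "a = (j, b)" by (cases a)
  have "k \<le> j" using Cons.prems a by auto
  then have "(2::nat) ^ k \<le> 2 ^ j" by (simp add: power_increasing)
  moreover have "2 ^ Suc k * (2 ^ length xs - 1) \<le> weight xs"
    using Cons a \<open>k \<le> j\<close> by (intro Cons.IH) auto
  moreover have "(2::nat) ^ k * (2 ^ length (a # xs) - 1) = 2 ^ k + 2 ^ Suc k * (2 ^ length xs - 1)"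
    by (simp add: algebra_simps)
  ultimately have "(2::nat) ^ k * (2 ^ length (a # xs) - 1) \<le> 2 ^ j + weight xs" by linarith
  then show ?case using a by simp
qed simp

lemma split_run_append: "split_run k xs = (p, q) \<Longrightarrow> xs = p @ q"
  by (induction k xs arbitrary: p q rule: split_run.induct) (auto split: if_splits prod.splits)

context cf_setting begin

lemma valid_join_blocks_append:
  "valid_cfg (join_blocks (p @ q)) \<longleftrightarrow> valid_cfg (join_blocks p) \<and> valid_cfg (join_blocks q) \<and>
     objects (join_blocks p) \<inter> objects (join_blocks q) = {} \<and> slots (join_blocks p) \<inter> slots (join_blocks q) = {}"
  by (induction p rule: join_blocks.induct) (auto simp: join_blocks_append)

lemma cfg_delete_join_blocks: "cfg_delete x (join_blocks xs) = join_blocks (map_blocks (cfg_delete x) xs)"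
  by (induction xs rule: join_blocks.induct) auto

lemma migrate_blocks_props:
  "valid_cfg (join_blocks xs) \<Longrightarrow>
     valid_cfg (join_blocks (map_blocks (migrate_cfg k) xs)) \<and>
     objects (join_blocks (map_blocks (migrate_cfg k) xs)) = objects (join_blocks xs) \<and>
     slots (join_blocks (map_blocks (migrate_cfg k) xs)) = slots (join_blocks xs) \<and>
     card {y \<in> objects (join_blocks xs). colour (join_blocks (map_blocks (migrate_cfg k) xs)) y \<noteq> colour (join_blocks xs) y}
       \<le> k * length xs"
proof (induction xs rule: join_blocks.induct)
  case (2 j b xs)
  let ?ys = "join_blocks (map_blocks (migrate_cfg k) xs)"
  have vb: "valid_cfg b" and vx: "valid_cfg (join_blocks xs)" using "2.prems" by auto
  note M = migrate_cfg_props[OF vb, of k]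
  note IH = "2.IH"[OF vx]
  have "{y \<in> objects (join_blocks ((j, b) # xs)). colour (join_blocks (map_blocks (migrate_cfg k) ((j, b) # xs))) y
        \<noteq> colour (join_blocks ((j, b) # xs)) y}
      \<subseteq> {y \<in> objects b. colour (migrate_cfg k b) y \<noteq> colour b y}
        \<union> {y \<in> objects (join_blocks xs). colour ?ys y \<noteq> colour (join_blocks xs) y}"
    using M(2) by auto
  then have "card {y \<in> objects (join_blocks ((j, b) # xs)).
        colour (join_blocks (map_blocks (migrate_cfg k) ((j, b) # xs))) y \<noteq> colour (join_blocks ((j, b) # xs)) y}
      \<le> k + k * length xs"
    using M(7) IH valid_finite[OF vb] valid_finite[OF vx]
    by (intro order.trans[OF card_le_if_subset_Un]) auto
  then show ?case using "2.prems" M IH by auto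
qed simp

lemma budget_simps [simp]:
  "budget Empty = 0" "budget (Leaf g) = \<gamma> (card (cg_base g))" "budget (Join a b) = budget a + budget b"
  "budget (Overlay a g V) = \<gamma> (card (cg_base g)) + budget a"
  unfolding budget_def by auto

lemma budget_join_blocks: "budget (join_blocks xs) = (\<Sum>p\<leftarrow>xs. budget (snd p))"
  by (induction xs rule: join_blocks.induct) auto

lemma budget_map_cg_base: "budget c = (\<Sum>t\<leftarrow>map cg_base (groups c). \<gamma> (card t))"
  unfolding budget_def by (simp add: comp_def)

lemma bases_le_map_cg_base: "bases_le M c \<longleftrightarrow> (\<forall>t\<in>set (map cg_base (groups c)). card t \<le> M)"
  unfolding bases_le_def by simp

lemma bases_le_mono: "bases_le M c \<Longrightarrow> M \<le> M' \<Longrightarrow> bases_le M' c"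
  unfolding bases_le_def by auto

definition gamma_sum :: "nat \<Rightarrow> nat" where
  "gamma_sum a = (\<Sum>i\<le>a. \<gamma> (2 ^ i))"

lemma gamma_sum_mono: "a \<le> b \<Longrightarrow> gamma_sum a \<le> gamma_sum b"
  unfolding gamma_sum_def by (intro sum_mono2) auto

lemma gamma_le_gamma_sum: "m \<le> 2 ^ i \<Longrightarrow> i \<le> a \<Longrightarrow> \<gamma> m \<le> gamma_sum a"
proof -
  assume "m \<le> 2 ^ i" "i \<le> a"
  then have "\<gamma> m \<le> \<gamma> (2 ^ i)" using mono_gamma by (simp add: monoD)
  also have "\<dots> \<le> gamma_sum a" unfolding gamma_sum_def using \<open>i \<le> a\<close> by (intro member_le_sum) auto
  finally show ?thesis .
qed

lemma gamma_sum_Suc: "gamma_sum m = (\<Sum>i<m. \<gamma> (2 ^ i)) + \<gamma> (2 ^ m)"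
  unfolding gamma_sum_def by (simp add: lessThan_Suc_atMost[symmetric])

text \<open>In \<open>good_blocks p xs\<close> a block of level \<open>j\<close> is paired with \<open>p\<close> plus the weight of the blocks
  below it.  This number grows by one with every update, while the block moves two objects,
  and the block takes part in a carry only once it has reached \<open>2^j - 1\<close>: then the block is
  finished.\<close>
definition good_block :: "nat \<Rightarrow> nat \<Rightarrow> 'o cfg \<Rightarrow> bool" where
  "good_block j p b \<longleftrightarrow> valid_cfg b \<and> block_shaped b \<and> height b \<le> 2 \<and> bases_le (2 ^ j) b \<and>
     budget b \<le> 2 * gamma_sum j \<and> (finished b \<or> unmigrated b + 2 * p \<le> 2 ^ j) \<and> (j = 0 \<longrightarrow> finished b)"

fun good_blocks :: "nat \<Rightarrow> (nat \<times> 'o cfg) list \<Rightarrow> bool" where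
  "good_blocks p [] = True"
| "good_blocks p ((j, b) # xs) = (good_block j p b \<and> good_blocks (p + 2 ^ j) xs)"

lemma finished_if_unmigrated_0:
  "valid_cfg b \<Longrightarrow> block_shaped b \<Longrightarrow> unmigrated b = 0 \<Longrightarrow> finished b"
  by (cases b) (auto dest!: wd_reachableD(3) simp: card_eq_0_iff)

lemma good_block_mono: "good_block j p b \<Longrightarrow> p' \<le> p \<Longrightarrow> good_block j p' b"
  unfolding good_block_def by auto

lemma good_blocks_good_block: "good_blocks p xs \<Longrightarrow> \<forall>pb\<in>set xs. good_block (fst pb) 0 (snd pb)"
  by (induction p xs rule: good_blocks.induct) (auto intro: good_block_mono)

lemma good_block_finished: "good_block j (2 ^ j - 1) b \<Longrightarrow> finished b"
proof (rule ccontr)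
  assume b: "good_block j (2 ^ j - 1) b" and "\<not> finished b"
  then have "j \<noteq> 0" and u: "unmigrated b + 2 * (2 ^ j - 1) \<le> 2 ^ j" unfolding good_block_def by auto
  then have "(2::nat) \<le> 2 ^ j" by (simp add: self_le_power)
  then have "unmigrated b = 0" using u by linarith
  then show False using b \<open>\<not> finished b\<close> finished_if_unmigrated_0 unfolding good_block_def by blast
qed

lemma good_block_migrate: "good_block j p b \<Longrightarrow> good_block j (Suc p) (migrate_cfg 2 b)"
proof -
  assume b: "good_block j p b"
  then have v: "valid_cfg b" and shaped: "block_shaped b" unfolding good_block_def by simp_all
  note M = migrate_cfg_props[OF v, of 2]
  have same: "budget (migrate_cfg 2 b) = budget b" "bases_le (2 ^ j) (migrate_cfg 2 b) = bases_le (2 ^ j) b"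
    using M(4) by (simp_all add: budget_def bases_le_def)
  have shaped': "block_shaped (migrate_cfg 2 b)" using shaped by (cases b) auto
  have fin: "finished b \<Longrightarrow> finished (migrate_cfg 2 b)" by (cases b) (auto simp: migrate_full)
  have "finished (migrate_cfg 2 b) \<or> unmigrated (migrate_cfg 2 b) + 2 * Suc p \<le> 2 ^ j"
  proof (cases "finished b")
    case False
    then have u: "unmigrated b + 2 * p \<le> 2 ^ j" using b unfolding good_block_def by simp
    show ?thesis
    proof (cases "2 \<le> unmigrated b")
      case True
      then have "unmigrated (migrate_cfg 2 b) + 2 * Suc p = unmigrated b + 2 * p" using M(6) by simp
      then show ?thesis using u by simp
    next
      case False
      then have "unmigrated (migrate_cfg 2 b) = 0" using M(6) by simp
      then show ?thesis using finished_if_unmigrated_0 M(1) shaped' by blast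
    qed
  qed (use fin in simp)
  then show ?thesis using b M(1,5) same shaped' fin unfolding good_block_def by auto
qed

lemma good_blocks_migrate: "good_blocks p xs \<Longrightarrow> good_blocks (Suc p) (map_blocks (migrate_cfg 2) xs)"
  by (induction p xs rule: good_blocks.induct) (auto simp: good_block_migrate)

lemma split_run_props:
  assumes "good_blocks (2 ^ k - 1) xs" "levels_increasing xs" "\<forall>p\<in>set xs. k \<le> fst p" "split_run k xs = (p, q)"
  shows "(\<forall>pb\<in>set p. finished (snd pb) \<and> good_block (fst pb) 0 (snd pb)) \<and> map fst p = [k..<k + length p] \<and>
    good_blocks (2 ^ (k + length p) - 1) q \<and> (\<forall>pb\<in>set q. k + length p < fst pb) \<and>
    weight p + 2 ^ k = 2 ^ (k + length p)"
  using assms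
proof (induction xs arbitrary: k p q)
  case (Cons a ys)
  obtain j b where a: "a = (j, b)" by (cases a)
  show ?case
  proof (cases "j = k")
    case False
    then have pq: "p = []" "q = a # ys" using Cons.prems(4) a by auto
    have "\<forall>pb\<in>set q. k < fst pb" using Cons.prems(2,3) a False pq by fastforce
    then show ?thesis using pq Cons.prems(1) by simp
  next
    case True
    obtain p' q' where sp: "split_run (Suc k) ys = (p', q')" by (cases "split_run (Suc k) ys")
    have pq: "p = (j, b) # p'" "q = q'" using Cons.prems(4) a True sp by auto
    have bk: "good_block k (2 ^ k - 1) b" and bl: "good_blocks (2 ^ k - 1 + 2 ^ k) ys"
      using Cons.prems(1) a True by auto
    have "(2::nat) ^ k - 1 + 2 ^ k = 2 ^ Suc k - 1" by simp
    then have bl': "good_blocks (2 ^ Suc k - 1) ys" using bl by simp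
    have "levels_increasing ys" "\<forall>pb\<in>set ys. Suc k \<le> fst pb"
      using Cons.prems(2) a True by auto
    note IH = Cons.IH[OF bl' this sp]
    have "map fst p = [k..<k + length p]" using IH pq True by (simp add: upt_rec)
    moreover have "weight p + 2 ^ k = 2 ^ (k + length p)" using IH pq True by simp
    moreover have "finished b" "good_block k 0 b"
      using good_block_finished[OF bk] good_block_mono[OF bk] by auto
    ultimately show ?thesis using IH pq a True by auto
  qed
qed simp

definition init_col :: "'o set \<Rightarrow> ('o \<Rightarrow> int)" where
  "init_col T = (SOME c. reachable T T c)"

lemma reachable_init_col: "finite T \<Longrightarrow> T \<subseteq> F \<Longrightarrow> reachable T T (init_col T)"
proof -
  assume T: "finite T" "T \<subseteq> F"
  then obtain c where "allows_weak_deletions rel \<gamma> r T c" using weak_deletions by blast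
  then have "reachable T T c" using allows_weak_deletions_reachable T by blast
  then show ?thesis unfolding init_col_def by (rule someI[where P = "reachable T T"])
qed

definition singleton_group :: "'o \<Rightarrow> nat \<Rightarrow> 'o cgroup" where
  "singleton_group x s = CGroup {x} {x} (init_col {x}) s"

definition merged_block :: "'o \<Rightarrow> nat \<Rightarrow> (nat \<times> 'o cfg) list \<Rightarrow> 'o cfg" where
  "merged_block x s p = (let src = Join (Leaf (singleton_group x s)) (join_blocks (map_blocks flatten p));
     T = objects src in Overlay src (CGroup T T (init_col T) (Suc s)) {})"

definition new_block :: "'o \<Rightarrow> nat \<Rightarrow> (nat \<times> 'o cfg) list \<Rightarrow> 'o cfg" where
  "new_block x s p = (if p = [] then Leaf (singleton_group x s) else merged_block x s p)"

definition add_object :: "'o \<Rightarrow> nat \<Rightarrow> (nat \<times> 'o cfg) list \<Rightarrow> (nat \<times> 'o cfg) list" where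
  "add_object x s xs = (case split_run 0 xs of (p, q) \<Rightarrow> (length p, new_block x s p) # q)"

lemma good_singleton_group: "x \<in> F \<Longrightarrow> good_group (singleton_group x s)"
  unfolding singleton_group_def using reachable_init_col[of "{x}"] by simp

lemma flatten_finished:
  assumes "good_block j 0 b" "finished b"
  obtains g where "flatten b = Leaf g" "good_group g" "objects b = cg_set g" "slots (flatten b) \<subseteq> slots b"
    "\<forall>y\<in>objects b. colour (flatten b) y = colour b y" "card (cg_base g) \<le> 2 ^ j"
proof -
  have v: "valid_cfg b" and sh: "block_shaped b" and bl: "bases_le (2 ^ j) b"
    using assms(1) unfolding good_block_def by auto
  from sh obtain g where "b = Leaf g \<or> (\<exists>a V. b = Overlay a g V)" by (cases b) auto
  then show ?thesis
  proof
    assume "b = Leaf g"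
    then show ?thesis using v bl by (intro that) (auto simp: bases_le_def)
  next
    assume "\<exists>a V. b = Overlay a g V"
    then obtain a V where b: "b = Overlay a g V" by blast
    then have "V = cg_set g" using assms(2) by simp
    then show ?thesis using v bl b by (intro that) (auto simp: bases_le_def)
  qed
qed

lemma flatten_blocks_props:
  assumes "valid_cfg (join_blocks p)" "\<forall>pb\<in>set p. finished (snd pb) \<and> good_block (fst pb) 0 (snd pb)"
  defines "p' \<equiv> join_blocks (map_blocks flatten p)"
  shows "valid_cfg p' \<and> objects p' = objects (join_blocks p) \<and> slots p' \<subseteq> slots (join_blocks p) \<and>
    (\<forall>y\<in>objects (join_blocks p). colour p' y = colour (join_blocks p) y) \<and>
    budget p' \<le> (\<Sum>pb\<leftarrow>p. \<gamma> (2 ^ fst pb)) \<and> card (objects (join_blocks p)) \<le> weight p \<and> height p' \<le> 1 \<and>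
    (\<forall>g\<in>set (groups p'). \<exists>pb\<in>set p. card (cg_base g) \<le> 2 ^ fst pb)"
  using assms(1,2) unfolding p'_def
proof (induction p rule: join_blocks.induct)
  case (2 j b xs)
  then have vb: "valid_cfg b" and vx: "valid_cfg (join_blocks xs)"
    and disj: "objects b \<inter> objects (join_blocks xs) = {}" "slots b \<inter> slots (join_blocks xs) = {}"
    and b: "finished b" "good_block j 0 b"
    and fx: "\<forall>pb\<in>set xs. finished (snd pb) \<and> good_block (fst pb) 0 (snd pb)" by auto
  note IH = "2.IH"[OF vx fx]
  obtain g where g: "flatten b = Leaf g" "good_group g" "objects b = cg_set g" "slots (flatten b) \<subseteq> slots b"
    "\<forall>y\<in>objects b. colour (flatten b) y = colour b y" "card (cg_base g) \<le> 2 ^ j"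
    using flatten_finished[OF b(2,1)] by blast
  have "card (objects b) \<le> 2 ^ j"
    using g(3,6) wd_reachableD(1,2)[OF g(2)] card_mono by (metis order.trans)
  then have "card (objects (join_blocks ((j, b) # xs))) \<le> weight ((j, b) # xs)"
    using IH card_Un_le[of "objects b" "objects (join_blocks xs)"] by auto
  moreover have "\<gamma> (card (cg_base g)) \<le> \<gamma> (2 ^ j)" using g(6) mono_gamma by (simp add: monoD)
  ultimately show ?case using IH g disj "2.prems" by auto
qed simp

lemma levels_upt_lt: "map fst p = [0..<m] \<Longrightarrow> pb \<in> set p \<Longrightarrow> fst pb < m"
proof -
  assume "map fst p = [0..<m]" "pb \<in> set p"
  then have "fst pb \<in> set [0..<m]" by (metis image_eqI set_map)
  then show ?thesis by simp
qed

lemma sum_list_levels_upt: "map fst p = [0..<m] \<Longrightarrow> (\<Sum>pb\<leftarrow>p. f (fst pb)) = (\<Sum>i<m. f i)"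
proof -
  assume levels: "map fst p = [0..<m]"
  have "(\<Sum>pb\<leftarrow>p. f (fst pb)) = (\<Sum>i\<leftarrow>map fst p. f i)" by (simp add: comp_def)
  then show ?thesis unfolding levels by (simp add: interv_sum_list_conv_sum_set_nat atLeast0LessThan)
qed

lemma merged_block_props:
  assumes vp: "valid_cfg (join_blocks p)" and fp: "\<forall>pb\<in>set p. finished (snd pb) \<and> good_block (fst pb) 0 (snd pb)"
    and levels: "map fst p = [0..<m]" and wp: "weight p + 1 = 2 ^ m" and m: "m \<noteq> 0"
    and x: "x \<notin> objects (join_blocks p)" "insert x (objects (join_blocks p)) \<subseteq> F"
    and sp: "\<forall>t\<in>slots (join_blocks p). t < s"
  defines "b \<equiv> merged_block x s p"
  shows "good_block m 0 b" "objects b = insert x (objects (join_blocks p))"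
    "slots b \<subseteq> slots (join_blocks p) \<union> {s, Suc s}"
    "\<forall>y\<in>objects (join_blocks p). colour b y = colour (join_blocks p) y"
proof -
  define src where "src = Join (Leaf (singleton_group x s)) (join_blocks (map_blocks flatten p))"
  define T where "T = objects src"
  have b: "b = Overlay src (CGroup T T (init_col T) (Suc s)) {}"
    unfolding b_def merged_block_def src_def T_def Let_def ..
  note P = flatten_blocks_props[OF vp fp]
  have T: "T = insert x (objects (join_blocks p))" unfolding T_def src_def using P
    by (simp add: singleton_group_def)
  have vsrc: "valid_cfg src" unfolding src_def using P x sp good_singleton_group[of x s]
    by (auto simp: singleton_group_def)
  have slsrc: "slots src \<subseteq> insert s (slots (join_blocks p))"
    unfolding src_def using P by (auto simp: singleton_group_def)
  have "card T \<le> Suc (card (objects (join_blocks p)))"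
    unfolding T using valid_finite[OF vp] by (simp add: card_insert_if)
  then have cT: "card T \<le> 2 ^ m" using P wp by linarith
  have "card (cg_base g) \<le> 2 ^ m" if "g \<in> set (groups src)" for g
  proof -
    have "g = singleton_group x s \<or> g \<in> set (groups (join_blocks (map_blocks flatten p)))"
      using that by (simp add: src_def)
    then show ?thesis
    proof
      assume "g \<in> set (groups (join_blocks (map_blocks flatten p)))"
      then obtain pb where pb: "pb \<in> set p" "card (cg_base g) \<le> 2 ^ fst pb" using P by blast
      moreover have "(2::nat) ^ fst pb \<le> 2 ^ m" using levels_upt_lt[OF levels pb(1)] by simp
      ultimately show ?thesis by linarith
    qed (simp add: singleton_group_def)
  qed
  then have bases: "bases_le (2 ^ m) b" unfolding b bases_le_def using cT by auto
  have "\<gamma> (card T) \<le> \<gamma> (2 ^ m)" "\<gamma> 1 \<le> gamma_sum m"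
    using cT mono_gamma gamma_le_gamma_sum[of 1 0 m] by (auto simp: monoD)
  then have budget: "budget b \<le> 2 * gamma_sum m"
    using P gamma_sum_Suc[of m] sum_list_levels_upt[OF levels, of "\<lambda>i. \<gamma> (2 ^ i)"] unfolding b src_def
    by (simp add: singleton_group_def)
  have "good_group (CGroup T T (init_col T) (Suc s))"
    using reachable_init_col[OF valid_finite[OF vsrc]] T x(2) unfolding T_def by simp
  moreover have "t < Suc s" if "t \<in> slots src" for t
  proof -
    have "t = s \<or> t \<in> slots (join_blocks p)" using slsrc that by blast
    then show ?thesis using sp by auto
  qed
  ultimately have "valid_cfg b" unfolding b using vsrc T_def by auto
  moreover have "height b \<le> 2" unfolding b src_def using P by simp
  ultimately show "good_block m 0 b" using bases budget cT m unfolding good_block_def b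
    by (simp del: valid_cfg.simps)
  show "objects b = insert x (objects (join_blocks p))" using T unfolding b T_def by simp
  show "slots b \<subseteq> slots (join_blocks p) \<union> {s, Suc s}" unfolding b using slsrc by auto
  show "\<forall>y\<in>objects (join_blocks p). colour b y = colour (join_blocks p) y"
    unfolding b src_def using P x by (auto simp: singleton_group_def)
qed

lemma new_block_props:
  assumes vp: "valid_cfg (join_blocks p)" and fp: "\<forall>pb\<in>set p. finished (snd pb) \<and> good_block (fst pb) 0 (snd pb)"
    and levels: "map fst p = [0..<length p]" and wp: "weight p + 1 = 2 ^ length p"
    and x: "x \<in> F" "x \<notin> objects (join_blocks p)" "objects (join_blocks p) \<subseteq> F"
    and sp: "\<forall>t\<in>slots (join_blocks p). t < s"
  defines "b \<equiv> new_block x s p"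
  shows "good_block (length p) 0 b" "objects b = insert x (objects (join_blocks p))"
    "slots b \<subseteq> slots (join_blocks p) \<union> {s, Suc s}"
    "\<forall>y\<in>objects (join_blocks p). colour b y = colour (join_blocks p) y"
proof -
  have "good_block (length p) 0 b \<and> objects b = insert x (objects (join_blocks p)) \<and>
    slots b \<subseteq> slots (join_blocks p) \<union> {s, Suc s} \<and>
    (\<forall>y\<in>objects (join_blocks p). colour b y = colour (join_blocks p) y)"
  proof (cases "p = []")
    case True
    then have "b = Leaf (singleton_group x s)" unfolding b_def new_block_def by simp
    then show ?thesis using True good_singleton_group[OF x(1)]
      by (simp add: good_block_def bases_le_def gamma_sum_def singleton_group_def)
  next
    case False
    then have "b = merged_block x s p" unfolding b_def new_block_def by simp
    then show ?thesis using merged_block_props[OF vp fp levels wp] False x sp by auto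
  qed
  then show "good_block (length p) 0 b" "objects b = insert x (objects (join_blocks p))"
    "slots b \<subseteq> slots (join_blocks p) \<union> {s, Suc s}"
    "\<forall>y\<in>objects (join_blocks p). colour b y = colour (join_blocks p) y" by auto
qed

lemma add_object_props:
  assumes vx: "valid_cfg (join_blocks xs)" and bo: "good_blocks 0 xs" and inc: "levels_increasing xs"
    and x: "x \<in> F" "x \<notin> objects (join_blocks xs)" and F: "objects (join_blocks xs) \<subseteq> F"
    and sl: "\<forall>t\<in>slots (join_blocks xs). t < s"
  defines "ys \<equiv> add_object x s xs"
  shows "valid_cfg (join_blocks ys) \<and> objects (join_blocks ys) = insert x (objects (join_blocks xs)) \<and>
    slots (join_blocks ys) \<subseteq> slots (join_blocks xs) \<union> {s, Suc s} \<and>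
    (\<forall>y\<in>objects (join_blocks xs). colour (join_blocks ys) y = colour (join_blocks xs) y) \<and>
    good_blocks 0 (map_blocks (migrate_cfg 2) ys) \<and> levels_increasing ys \<and> weight ys = Suc (weight xs)"
proof -
  obtain p q where sp: "split_run 0 xs = (p, q)" by (cases "split_run 0 xs")
  define b where "b = new_block x s p"
  have ys: "ys = (length p, b) # q" and xs: "xs = p @ q"
    using sp split_run_append[OF sp] unfolding ys_def add_object_def b_def by simp_all
  have SP: "\<forall>pb\<in>set p. finished (snd pb) \<and> good_block (fst pb) 0 (snd pb)" "map fst p = [0..<length p]"
    "good_blocks (2 ^ length p - 1) q" "\<forall>pb\<in>set q. length p < fst pb" "weight p + 1 = 2 ^ length p"
    using split_run_props[of 0 xs p q] bo inc sp by auto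
  have V: "valid_cfg (join_blocks p)" "valid_cfg (join_blocks q)"
    "objects (join_blocks p) \<inter> objects (join_blocks q) = {}" "slots (join_blocks p) \<inter> slots (join_blocks q) = {}"
    using vx valid_join_blocks_append unfolding xs by auto
  have obj: "objects (join_blocks xs) = objects (join_blocks p) \<union> objects (join_blocks q)"
    "slots (join_blocks xs) = slots (join_blocks p) \<union> slots (join_blocks q)"
    unfolding xs by (simp_all add: join_blocks_append)
  note B = new_block_props[OF V(1) SP(1,2,5), of x s, folded b_def]
  have B: "good_block (length p) 0 b" "objects b = insert x (objects (join_blocks p))"
    "slots b \<subseteq> slots (join_blocks p) \<union> {s, Suc s}" "\<forall>y\<in>objects (join_blocks p). colour b y = colour (join_blocks p) y"
    using B x F sl obj by auto
  have "\<forall>t\<in>slots (join_blocks q). t < s" using sl obj by simp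
  then have "s \<notin> slots (join_blocks q)" "Suc s \<notin> slots (join_blocks q)" by auto
  then have "(slots (join_blocks p) \<union> {s, Suc s}) \<inter> slots (join_blocks q) = {}" using V(4) by auto
  then have "slots b \<inter> slots (join_blocks q) = {}" using B(3) by blast
  moreover have "objects b \<inter> objects (join_blocks q) = {}" using B(2) V(3) x(2) obj by auto
  ultimately have "valid_cfg (join_blocks ys)" using B(1) V(2) unfolding ys good_block_def by simp
  moreover have "colour (join_blocks ys) y = colour (join_blocks xs) y" if "y \<in> objects (join_blocks xs)" for y
    using B(2,4) that x(2) unfolding ys xs by (cases "y \<in> objects (join_blocks p)") (auto simp: colour_join_blocks_append)
  moreover have "good_blocks 0 (map_blocks (migrate_cfg 2) ys)"
  proof -
    have "good_block (length p) 0 (migrate_cfg 2 b)"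
      using good_block_mono[OF good_block_migrate[OF B(1)]] by simp
    moreover have "good_blocks (2 ^ length p) (map_blocks (migrate_cfg 2) q)"
      using good_blocks_migrate[OF SP(3)] by simp
    ultimately show ?thesis unfolding ys by simp
  qed
  moreover have "levels_increasing ys" using SP(4) inc xs sorted_wrt_append unfolding ys by auto
  moreover have "weight ys = Suc (weight xs)" using SP(5) unfolding ys xs by (simp add: weight_append)
  ultimately show ?thesis using B(2,3) obj unfolding ys by auto
qed

end

section \<open>Epochs\<close>

text \<open>The group \<open>big\<close> (all objects present at the start of the epoch,
  \<open>size0\<close> of them) is laid over the configuration \<open>old\<close> of the previous epoch, with moved set
  \<open>moved\<close>; \<open>blocks\<close> holds the objects inserted during the epoch; \<open>steps\<close> counts the updates of
  the epoch; all slots in use are below \<open>next_slot\<close>; \<open>old_bound\<close> bounds the ground sets of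
  the groups of \<open>old\<close>.\<close>
datatype 'o state = State (old: "'o cfg") (big: "'o cgroup") (moved: "'o set")
  (blocks: "(nat \<times> 'o cfg) list") (size0: nat) (steps: nat) (next_slot: nat) (old_bound: nat)

definition top_overlay :: "'o state \<Rightarrow> 'o cfg" where
  "top_overlay s = Overlay (old s) (big s) (moved s)"

definition state_cfg :: "'o state \<Rightarrow> 'o cfg" where
  "state_cfg s = Join (top_overlay s) (join_blocks (blocks s))"

lemma state_cfg_simps:
  "objects (state_cfg s) = objects (old s) \<union> objects (join_blocks (blocks s))"
  "slots (state_cfg s) = insert (cg_slot (big s)) (slots (old s)) \<union> slots (join_blocks (blocks s))"
  unfolding state_cfg_def top_overlay_def by simp_all

lemma ceillog2_le: "m \<le> 2 ^ a \<Longrightarrow> ceillog2 m \<le> a"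
  by (cases "m = 0") (simp_all add: ceillog2_le_iff)

lemma le_ceillog2_if_power_le: "2 ^ j \<le> M \<Longrightarrow> j \<le> ceillog2 M"
proof -
  assume "2 ^ j \<le> M"
  then have "(2::nat) ^ j \<le> 2 ^ ceillog2 M" using le_two_power_ceillog2[of M] by (rule order.trans)
  then show ?thesis by (rule power_le_imp_le_exp[rotated]) simp
qed

fun ov_inner :: "'o cfg \<Rightarrow> 'o cfg" where
  "ov_inner (Overlay a g V) = a"
| "ov_inner _ = Empty"

fun ov_group :: "'o cfg \<Rightarrow> 'o cgroup" where
  "ov_group (Overlay a g V) = g"
| "ov_group _ = CGroup {} {} (\<lambda>_. 0) 0"

fun ov_moved :: "'o cfg \<Rightarrow> 'o set" where
  "ov_moved (Overlay a g V) = V"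
| "ov_moved _ = {}"

fun is_overlay :: "'o cfg \<Rightarrow> bool" where
  "is_overlay (Overlay a g V) = True"
| "is_overlay _ = False"

lemma is_overlay_eq: "is_overlay c \<Longrightarrow> c = Overlay (ov_inner c) (ov_group c) (ov_moved c)"
  by (cases c) auto

context cf_setting begin

text \<open>The invariant, with \<open>e = 1\<close> for the state reached by an update before the epoch is
  possibly closed.  The migration of the big group progresses by 16 objects per update, so it
  is complete after \<open>size0 / 16\<close> updates, when the epoch ends.\<close>
definition state_inv :: "nat \<Rightarrow> 'o state \<Rightarrow> bool" where
  "state_inv e s \<longleftrightarrow> valid_cfg (state_cfg s) \<and> objects (state_cfg s) \<subseteq> F \<and>
     (\<forall>t\<in>slots (state_cfg s). t < next_slot s) \<and> steps s \<le> size0 s div 16 + e \<and>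
     (unmigrated (top_overlay s) + 16 * steps s \<le> size0 s \<or> unmigrated (top_overlay s) = 0) \<and>
     card (cg_base (big s)) \<le> size0 s \<and> bases_le (old_bound s) (old s) \<and>
     old_bound s \<le> 2 * (size0 s + 1) \<and> height (old s) \<le> 2 \<and>
     budget (old s) \<le> (ceillog2 (old_bound s) + 2) * (2 * gamma_sum (ceillog2 (old_bound s))) \<and>
     good_blocks 0 (blocks s) \<and> levels_increasing (blocks s) \<and> weight (blocks s) \<le> steps s \<and>
     size0 s \<le> card (objects (state_cfg s)) + steps s \<and> card (objects (state_cfg s)) \<le> size0 s + steps s"

lemma blocks_bounds:
  assumes "good_blocks 0 xs" "levels_increasing xs" "weight xs \<le> M"
  shows "length xs \<le> ceillog2 M + 1" "budget (join_blocks xs) \<le> length xs * (2 * gamma_sum (ceillog2 M))"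
    "bases_le M (join_blocks xs)" "height (join_blocks xs) \<le> 2" "2 ^ length xs \<le> M + 1"
proof -
  have B: "\<forall>pb\<in>set xs. good_block (fst pb) 0 (snd pb)" using good_blocks_good_block[OF assms(1)] .
  have "2 ^ length xs - 1 \<le> weight xs" using weight_lower_bound[OF assms(2), of 0] by simp
  then show len: "2 ^ length xs \<le> M + 1" using assms(3) by simp
  also have "\<dots> \<le> 2 ^ (ceillog2 M + 1)"
  proof -
    have "M \<le> 2 ^ ceillog2 M" "1 \<le> (2::nat) ^ ceillog2 M" by (simp_all add: le_two_power_ceillog2)
    then have "M + 1 \<le> 2 ^ ceillog2 M + 2 ^ ceillog2 M" by linarith
    then show ?thesis by simp
  qed
  finally have "(2::nat) ^ length xs \<le> 2 ^ (ceillog2 M + 1)" .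
  then show "length xs \<le> ceillog2 M + 1" by (rule power_le_imp_le_exp[rotated]) simp
  have level: "2 ^ fst pb \<le> M" if "pb \<in> set xs" for pb
    using weight_ge[of "fst pb" "snd pb" xs] that assms(3) by simp
  have "budget (snd pb) \<le> 2 * gamma_sum (ceillog2 M)" if "pb \<in> set xs" for pb
  proof -
    have "budget (snd pb) \<le> 2 * gamma_sum (fst pb)" using B that unfolding good_block_def by blast
    also have "\<dots> \<le> 2 * gamma_sum (ceillog2 M)"
      using gamma_sum_mono le_ceillog2_if_power_le[OF level[OF that]] by simp
    finally show ?thesis .
  qed
  then show "budget (join_blocks xs) \<le> length xs * (2 * gamma_sum (ceillog2 M))"
    unfolding budget_join_blocks using sum_list_mono[of xs _ "\<lambda>_. 2 * gamma_sum (ceillog2 M)"]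
    by (simp add: sum_list_triv)
  show "bases_le M (join_blocks xs)" unfolding bases_le_def
  proof
    fix g assume "g \<in> set (groups (join_blocks xs))"
    then obtain pb where pb: "pb \<in> set xs" "g \<in> set (groups (snd pb))" using groups_join_blocks by blast
    then have "card (cg_base g) \<le> 2 ^ fst pb" using B unfolding good_block_def bases_le_def by blast
    then show "card (cg_base g) \<le> M" using level[OF pb(1)] by simp
  qed
  show "height (join_blocks xs) \<le> 2" using B unfolding good_block_def by (intro height_join_blocks) blast
qed

text \<open>Closing an epoch: the big group has been moved completely, so it replaces the previous
  configuration as a leaf, and the current objects become the next big group.\<close>
definition restart :: "'o state \<Rightarrow> 'o state" where
  "restart s = (if steps s = size0 s div 16 + 1 then
     (let S = objects (state_cfg s) in
       State (Join (Leaf (big s)) (join_blocks (blocks s))) (CGroup S S (init_col S) (next_slot s)) {} []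
         (card S) 0 (Suc (next_slot s)) (Suc (size0 s)))
     else s)"

lemma restart_cfg:
  assumes inv: "state_inv 1 s" and due: "steps s = size0 s div 16 + 1"
  defines "S \<equiv> objects (state_cfg s)"
  shows "valid_cfg (state_cfg (restart s))" "objects (state_cfg (restart s)) = S"
    "\<forall>y\<in>S. colour (state_cfg (restart s)) y = colour (state_cfg s) y"
    "\<forall>t\<in>slots (state_cfg (restart s)). t < next_slot (restart s)"
proof -
  define old' where "old' = Join (Leaf (big s)) (join_blocks (blocks s))"
  have e: "restart s = State old' (CGroup S S (init_col S) (next_slot s)) {} [] (card S) 0
      (Suc (next_slot s)) (Suc (size0 s))"
    using due unfolding restart_def old'_def S_def Let_def by simp
  have v: "valid_cfg (state_cfg s)" and SF: "S \<subseteq> F" and sl: "\<forall>t\<in>slots (state_cfg s). t < next_slot s"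
    and prog: "unmigrated (top_overlay s) + 16 * steps s \<le> size0 s \<or> unmigrated (top_overlay s) = 0"
    using inv unfolding state_inv_def S_def by auto
  have O: "valid_cfg (old s)" "good_group (big s)" "cg_set (big s) = objects (old s)" "moved s \<subseteq> cg_set (big s)"
    "valid_cfg (join_blocks (blocks s))" "objects (old s) \<inter> objects (join_blocks (blocks s)) = {}"
    "slots (top_overlay s) \<inter> slots (join_blocks (blocks s)) = {}"
    using v unfolding state_cfg_def top_overlay_def by auto
  have "unmigrated (top_overlay s) = 0" using prog due by auto
  then have all_moved: "moved s = cg_set (big s)"
    using O(4) wd_reachableD(3)[OF O(2)] unfolding top_overlay_def by (simp add: card_eq_0_iff)
  have objects: "objects old' = S" unfolding old'_def S_def using O(3) by (simp add: state_cfg_simps)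
  have "valid_cfg old'" unfolding old'_def using O unfolding top_overlay_def by auto
  moreover have "good_group (CGroup S S (init_col S) (next_slot s))"
    using reachable_init_col[OF _ SF] valid_finite[OF v] unfolding S_def by simp
  moreover have "slots old' \<subseteq> slots (state_cfg s)"
    unfolding old'_def state_cfg_def top_overlay_def by auto
  ultimately show "valid_cfg (state_cfg (restart s))"
    unfolding e state_cfg_def top_overlay_def using objects sl state_cfg_simps(2)[of s] by auto
  show "objects (state_cfg (restart s)) = S" unfolding e state_cfg_def top_overlay_def using objects by simp
  show "\<forall>y\<in>S. colour (state_cfg (restart s)) y = colour (state_cfg s) y"
    unfolding e S_def state_cfg_def top_overlay_def old'_def using all_moved O(3) by auto
  show "\<forall>t\<in>slots (state_cfg (restart s)). t < next_slot (restart s)"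
    using \<open>slots old' \<subseteq> slots (state_cfg s)\<close> sl unfolding e state_cfg_def top_overlay_def
    by (auto intro: less_SucI)
qed

lemma restart_bounds:
  assumes inv: "state_inv 1 s" and due: "steps s = size0 s div 16 + 1"
  defines "old' \<equiv> Join (Leaf (big s)) (join_blocks (blocks s))" and "M \<equiv> Suc (size0 s)"
  shows "bases_le M old'" "M \<le> 2 * (card (objects (state_cfg s)) + 1)" "height old' \<le> 2"
    "budget old' \<le> (ceillog2 M + 2) * (2 * gamma_sum (ceillog2 M))"
proof -
  have I: "card (cg_base (big s)) \<le> size0 s" "good_blocks 0 (blocks s)" "levels_increasing (blocks s)"
    "weight (blocks s) \<le> M" "size0 s \<le> card (objects (state_cfg s)) + steps s"
    using inv due unfolding state_inv_def M_def by auto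
  note B = blocks_bounds[OF I(2,3,4)]
  show "bases_le M old'" using B(3) I(1) unfolding old'_def M_def bases_le_def by auto
  show "M \<le> 2 * (card (objects (state_cfg s)) + 1)"
  proof -
    define q where "q = size0 s div 16"
    have "16 * q \<le> size0 s" "size0 s \<le> card (objects (state_cfg s)) + q + 1"
      using I(5) due unfolding q_def by simp_all
    then have "size0 s + 1 \<le> 2 * card (objects (state_cfg s)) + 2" by (cases "q = 0") linarith+
    then show ?thesis unfolding M_def by simp
  qed
  show "height old' \<le> 2" using B(4) unfolding old'_def by simp
  have "\<gamma> (card (cg_base (big s))) \<le> gamma_sum (ceillog2 M)"
    using I(1) le_two_power_ceillog2[of M] unfolding M_def
    by (intro gamma_le_gamma_sum[of _ "ceillog2 (Suc (size0 s))"]) auto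
  moreover have "budget (join_blocks (blocks s)) \<le> (ceillog2 M + 1) * (2 * gamma_sum (ceillog2 M))"
    using B(1,2) by (meson le_trans mult_le_mono1)
  ultimately have "budget old' \<le> gamma_sum (ceillog2 M) + (ceillog2 M + 1) * (2 * gamma_sum (ceillog2 M))"
    unfolding old'_def by simp
  then show "budget old' \<le> (ceillog2 M + 2) * (2 * gamma_sum (ceillog2 M))" by (simp add: algebra_simps)
qed

lemma restart_props:
  assumes "state_inv 1 s"
  shows "state_inv 0 (restart s) \<and> objects (state_cfg (restart s)) = objects (state_cfg s) \<and>
    (\<forall>y\<in>objects (state_cfg s). colour (state_cfg (restart s)) y = colour (state_cfg s) y)"
proof (cases "steps s = size0 s div 16 + 1")
  case False
  then have "restart s = s" unfolding restart_def by simp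
  then show ?thesis using assms False unfolding state_inv_def by auto
next
  case True
  define S where "S = objects (state_cfg s)"
  have e: "restart s = State (Join (Leaf (big s)) (join_blocks (blocks s))) (CGroup S S (init_col S) (next_slot s))
      {} [] (card S) 0 (Suc (next_slot s)) (Suc (size0 s))"
    using True unfolding restart_def S_def Let_def by simp
  note C = restart_cfg[OF assms True, folded S_def] and B = restart_bounds[OF assms True, folded S_def]
  have "S \<subseteq> F" using assms unfolding state_inv_def S_def by simp
  then have "state_inv 0 (restart s)"
    using C B unfolding state_inv_def e by (simp add: top_overlay_def)
  then show ?thesis using C unfolding S_def by simp
qed

end

lemma migration_progress:
  fixes u u' n e :: nat
  assumes "u' \<le> u - 16" "u + 16 * e \<le> n \<or> u = 0"
  shows "u' + 16 * Suc e \<le> n \<or> u' = 0"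
  using assms by (cases "16 \<le> u") auto

context cf_setting begin

lemma valid_state_cfg:
  "valid_cfg (state_cfg s) \<longleftrightarrow> valid_cfg (top_overlay s) \<and> valid_cfg (join_blocks (blocks s)) \<and>
     objects (top_overlay s) \<inter> objects (join_blocks (blocks s)) = {} \<and>
     slots (top_overlay s) \<inter> slots (join_blocks (blocks s)) = {}"
  unfolding state_cfg_def by simp

lemma bases_le_state_cfg: "state_inv 0 s \<Longrightarrow> bases_le (2 * (size0 s + 1)) (state_cfg s)"
proof -
  assume I: "state_inv 0 s"
  then have "bases_le (steps s) (join_blocks (blocks s))"
    using blocks_bounds(3) unfolding state_inv_def by blast
  moreover have "steps s \<le> size0 s div 16" using I unfolding state_inv_def by simp
  then have "steps s \<le> size0 s" using div_le_dividend le_trans by blast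
  then have "steps s \<le> 2 * (size0 s + 1)" by simp
  moreover have "bases_le (2 * (size0 s + 1)) (old s)" using I bases_le_mono unfolding state_inv_def by blast
  ultimately show ?thesis using I bases_le_mono unfolding bases_le_def state_cfg_def top_overlay_def state_inv_def
    by auto
qed

lemma height_state_cfg: "state_inv 0 s \<Longrightarrow> height (state_cfg s) \<le> 3"
  using blocks_bounds(4) unfolding state_inv_def state_cfg_def top_overlay_def by fastforce

definition insert_pre :: "'o state \<Rightarrow> 'o \<Rightarrow> 'o state" where
  "insert_pre s x = State (old s) (big s) (migrate (cg_col (big s)) (cg_set (big s)) 16 (moved s))
     (map_blocks (migrate_cfg 2) (add_object x (next_slot s) (blocks s)))
     (size0 s) (Suc (steps s)) (next_slot s + 2) (old_bound s)"

definition insert_step :: "'o state \<Rightarrow> 'o \<Rightarrow> 'o state" where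
  "insert_step s x = restart (insert_pre s x)"

lemma add_object_state:
  assumes I: "state_inv 0 s" and x: "x \<in> F" "x \<notin> objects (state_cfg s)"
  defines "ys \<equiv> add_object x (next_slot s) (blocks s)"
  shows "valid_cfg (join_blocks ys) \<and> objects (join_blocks ys) = insert x (objects (join_blocks (blocks s))) \<and>
    slots (join_blocks ys) \<subseteq> slots (join_blocks (blocks s)) \<union> {next_slot s, Suc (next_slot s)} \<and>
    (\<forall>y\<in>objects (join_blocks (blocks s)). colour (join_blocks ys) y = colour (join_blocks (blocks s)) y) \<and>
    good_blocks 0 (map_blocks (migrate_cfg 2) ys) \<and> levels_increasing ys \<and> weight ys = Suc (weight (blocks s))"
proof -
  have "valid_cfg (join_blocks (blocks s))" "good_blocks 0 (blocks s)" "levels_increasing (blocks s)"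
    "objects (join_blocks (blocks s)) \<subseteq> F" "\<forall>t\<in>slots (join_blocks (blocks s)). t < next_slot s"
    using I unfolding state_inv_def valid_state_cfg by (auto simp: state_cfg_simps)
  moreover have "x \<notin> objects (join_blocks (blocks s))" using x(2) by (simp add: state_cfg_simps)
  ultimately show ?thesis using add_object_props[OF _ _ _ x(1)] unfolding ys_def by blast
qed

lemma state_cfg_insert_pre:
  "state_cfg (insert_pre s x) =
     Join (migrate_cfg 16 (top_overlay s)) (join_blocks (map_blocks (migrate_cfg 2) (add_object x (next_slot s) (blocks s))))"
  unfolding state_cfg_def top_overlay_def insert_pre_def by simp

lemma insert_pre_cfg:
  assumes I: "state_inv 0 s" and x: "x \<in> F" "x \<notin> objects (state_cfg s)"
  shows "valid_cfg (state_cfg (insert_pre s x))"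
    "objects (state_cfg (insert_pre s x)) = insert x (objects (state_cfg s))"
    "\<forall>t\<in>slots (state_cfg (insert_pre s x)). t < next_slot s + 2"
proof -
  define ys where "ys = add_object x (next_slot s) (blocks s)"
  have vt: "valid_cfg (top_overlay s)" "objects (top_overlay s) \<inter> objects (join_blocks (blocks s)) = {}"
    "slots (top_overlay s) \<inter> slots (join_blocks (blocks s)) = {}"
    using I unfolding state_inv_def valid_state_cfg by auto
  have sl: "\<forall>t\<in>slots (state_cfg s). t < next_slot s" using I unfolding state_inv_def by simp
  have obj: "objects (state_cfg s) = objects (top_overlay s) \<union> objects (join_blocks (blocks s))"
    "slots (state_cfg s) = slots (top_overlay s) \<union> slots (join_blocks (blocks s))"
    unfolding state_cfg_def by simp_all
  note C = add_object_state[OF I x, folded ys_def]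
  note L = migrate_blocks_props[OF conjunct1[OF C], of 2]
  note O = migrate_cfg_props[OF vt(1), of 16]
  note cfg = state_cfg_insert_pre[of s x, folded ys_def]
  have "\<forall>t\<in>slots (top_overlay s). t < next_slot s" using sl obj by simp
  then have "next_slot s \<notin> slots (top_overlay s)" "Suc (next_slot s) \<notin> slots (top_overlay s)" by auto
  then show "valid_cfg (state_cfg (insert_pre s x))"
    unfolding cfg using O(1-3) L C vt(2,3) x(2) obj by auto
  show "objects (state_cfg (insert_pre s x)) = insert x (objects (state_cfg s))"
    unfolding cfg using O(2) L C obj by auto
  have "slots (state_cfg (insert_pre s x)) \<subseteq> slots (state_cfg s) \<union> {next_slot s, Suc (next_slot s)}"
    unfolding cfg using O(3) L C obj by auto
  show "\<forall>t\<in>slots (state_cfg (insert_pre s x)). t < next_slot s + 2"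
  proof
    fix t
    assume "t \<in> slots (state_cfg (insert_pre s x))"
    then have "t \<in> slots (state_cfg s) \<or> t = next_slot s \<or> t = Suc (next_slot s)"
      using \<open>slots (state_cfg (insert_pre s x)) \<subseteq> _\<close> by blast
    then show "t < next_slot s + 2" using sl by auto
  qed
qed

lemma insert_pre_recolour:
  assumes I: "state_inv 0 s" and x: "x \<in> F" "x \<notin> objects (state_cfg s)"
  shows "card {y \<in> objects (state_cfg s). colour (state_cfg (insert_pre s x)) y \<noteq> colour (state_cfg s) y}
    \<le> 2 * length (add_object x (next_slot s) (blocks s)) + 16"
proof -
  define ys where "ys = add_object x (next_slot s) (blocks s)"
  have vt: "valid_cfg (top_overlay s)" using I unfolding state_inv_def valid_state_cfg by simp
  note C = add_object_state[OF I x, folded ys_def]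
  note O = migrate_cfg_props[OF vt, of 16]
  have "{y \<in> objects (state_cfg s). colour (state_cfg (insert_pre s x)) y \<noteq> colour (state_cfg s) y}
      \<subseteq> {y \<in> objects (top_overlay s). colour (migrate_cfg 16 (top_overlay s)) y \<noteq> colour (top_overlay s) y}
        \<union> {y \<in> objects (join_blocks ys). colour (join_blocks (map_blocks (migrate_cfg 2) ys)) y \<noteq> colour (join_blocks ys) y}"
    using O(2) C unfolding state_cfg_insert_pre[of s x, folded ys_def] by (auto simp: state_cfg_def)
  then have "card {y \<in> objects (state_cfg s). colour (state_cfg (insert_pre s x)) y \<noteq> colour (state_cfg s) y}
      \<le> 16 + 2 * length ys"
    using O(7) migrate_blocks_props[OF conjunct1[OF C], of 2] valid_finite[OF vt] valid_finite[OF conjunct1[OF C]]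
    by (intro order.trans[OF card_le_if_subset_Un]) auto
  then show ?thesis unfolding ys_def by simp
qed

lemma state_inv_insert_pre:
  assumes I: "state_inv 0 s" and x: "x \<in> F" "x \<notin> objects (state_cfg s)"
  shows "state_inv 1 (insert_pre s x)"
proof -
  define ys where "ys = add_object x (next_slot s) (blocks s)"
  note P = insert_pre_cfg[OF I x] and C = add_object_state[OF I x, folded ys_def]
  have vt: "valid_cfg (top_overlay s)" using I unfolding state_inv_def valid_state_cfg by simp
  have "top_overlay (insert_pre s x) = migrate_cfg 16 (top_overlay s)"
    by (simp add: insert_pre_def top_overlay_def)
  then have "unmigrated (top_overlay (insert_pre s x)) = unmigrated (top_overlay s) - 16"
    using migrate_cfg_props(6)[OF vt] by simp
  moreover have "card (insert x (objects (state_cfg s))) = Suc (card (objects (state_cfg s)))"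
    using x(2) valid_finite I unfolding state_inv_def by simp
  moreover have "steps (insert_pre s x) = Suc (steps s)" "size0 (insert_pre s x) = size0 s"
    "big (insert_pre s x) = big s" "old (insert_pre s x) = old s" "old_bound (insert_pre s x) = old_bound s"
    "next_slot (insert_pre s x) = next_slot s + 2" "blocks (insert_pre s x) = map_blocks (migrate_cfg 2) ys"
    by (simp_all add: insert_pre_def ys_def)
  ultimately show ?thesis
    using P C I x migration_progress[of "unmigrated (top_overlay (insert_pre s x))" "unmigrated (top_overlay s)"]
    unfolding state_inv_def by simp
qed

lemma insert_step_props:
  assumes I: "state_inv 0 s" and x: "x \<in> F" "x \<notin> objects (state_cfg s)"
  shows "state_inv 0 (insert_step s x) \<and> objects (state_cfg (insert_step s x)) = insert x (objects (state_cfg s)) \<and>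
    (\<exists>L. 2 ^ L \<le> steps s + 2 \<and>
       card {y \<in> objects (state_cfg s). colour (state_cfg (insert_step s x)) y \<noteq> colour (state_cfg s) y} \<le> 2 * L + 16)"
proof -
  define ys where "ys = add_object x (next_slot s) (blocks s)"
  note C = add_object_state[OF I x, folded ys_def] and P = insert_pre_cfg[OF I x]
  note R = restart_props[OF state_inv_insert_pre[OF I x]]
  have "2 ^ length ys - 1 \<le> weight ys" using weight_lower_bound[of ys 0] C by simp
  moreover have "weight (blocks s) \<le> steps s" using I unfolding state_inv_def by simp
  ultimately have "2 ^ length ys \<le> steps s + 2" using C by linarith
  moreover have "{y \<in> objects (state_cfg s). colour (state_cfg (insert_step s x)) y \<noteq> colour (state_cfg s) y}
      = {y \<in> objects (state_cfg s). colour (state_cfg (insert_pre s x)) y \<noteq> colour (state_cfg s) y}"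
    using R P(2) unfolding insert_step_def by auto
  ultimately show ?thesis using R P(2) insert_pre_recolour[OF I x, folded ys_def] unfolding insert_step_def
    by auto
qed

lemma finished_cfg_delete: "valid_cfg b \<Longrightarrow> finished b \<Longrightarrow> finished (cfg_delete x b)"
proof (cases b)
  case (Overlay a g V)
  assume b: "valid_cfg b" "finished b"
  then have "unmigrated (cfg_delete x b) = 0" using unmigrated_cfg_delete[OF b(1), of x] Overlay by simp
  moreover have "block_shaped (cfg_delete x b)" using Overlay by (simp add: Let_def)
  ultimately show ?thesis using finished_if_unmigrated_0 cfg_delete_props[OF b(1)] by blast
qed simp_all

lemma good_block_delete: "good_block j p b \<Longrightarrow> good_block j p (cfg_delete x b)"
proof -
  assume b: "good_block j p b"
  then have v: "valid_cfg b" and shaped: "block_shaped b" unfolding good_block_def by auto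
  note D = cfg_delete_props[OF v, of x]
  have "block_shaped (cfg_delete x b)" using shaped by (cases b) (auto simp: Let_def)
  moreover have "budget (cfg_delete x b) = budget b" "bases_le (2 ^ j) (cfg_delete x b) = bases_le (2 ^ j) b"
    using D by (simp_all add: budget_map_cg_base bases_le_map_cg_base)
  ultimately show ?thesis
    using b D finished_cfg_delete[OF v] unmigrated_cfg_delete[OF v, of x] unfolding good_block_def by auto
qed

lemma good_blocks_delete: "good_blocks p xs \<Longrightarrow> good_blocks p (map_blocks (cfg_delete x) xs)"
  by (induction p xs rule: good_blocks.induct) (auto intro: good_block_delete)

definition delete_pre :: "'o state \<Rightarrow> 'o \<Rightarrow> 'o state" where
  "delete_pre s x = (let T = migrate_cfg 16 (cfg_delete x (top_overlay s)) in
     State (ov_inner T) (ov_group T) (ov_moved T) (map_blocks (cfg_delete x) (blocks s))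
       (size0 s) (Suc (steps s)) (next_slot s) (old_bound s))"

definition delete_step :: "'o state \<Rightarrow> 'o \<Rightarrow> 'o state" where
  "delete_step s x = restart (delete_pre s x)"

lemma top_overlay_delete_pre:
  "top_overlay (delete_pre s x) = migrate_cfg 16 (cfg_delete x (top_overlay s))"
proof -
  have "is_overlay (migrate_cfg 16 (cfg_delete x (top_overlay s)))"
    unfolding top_overlay_def by (simp add: Let_def)
  then show ?thesis unfolding delete_pre_def Let_def top_overlay_def
    by (simp add: is_overlay_eq[symmetric])
qed

lemma state_cfg_delete_pre:
  "state_cfg (delete_pre s x) = Join (migrate_cfg 16 (cfg_delete x (top_overlay s))) (cfg_delete x (join_blocks (blocks s)))"
  unfolding state_cfg_def top_overlay_delete_pre by (simp add: delete_pre_def Let_def cfg_delete_join_blocks)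

lemma delete_pre_groups:
  assumes "valid_cfg (top_overlay s)"
  shows "map cg_base (groups (old (delete_pre s x))) = map cg_base (groups (old s))"
    "cg_base (big (delete_pre s x)) = cg_base (big s)" "height (old (delete_pre s x)) = height (old s)"
proof -
  define T where "T = migrate_cfg 16 (cfg_delete x (top_overlay s))"
  have "map cg_base (groups T) = map cg_base (groups (top_overlay s))" "height T = height (top_overlay s)"
    using cfg_delete_props[OF assms, of x] migrate_cfg_props(1,4,5)[of "cfg_delete x (top_overlay s)" 16]
    unfolding T_def by auto
  moreover have "T = Overlay (old (delete_pre s x)) (big (delete_pre s x)) (moved (delete_pre s x))"
    using top_overlay_delete_pre[of s x] unfolding T_def top_overlay_def by simp
  ultimately show "map cg_base (groups (old (delete_pre s x))) = map cg_base (groups (old s))"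
    "cg_base (big (delete_pre s x)) = cg_base (big s)" "height (old (delete_pre s x)) = height (old s)"
    unfolding top_overlay_def by simp_all
qed

lemma delete_pre_props:
  assumes I: "state_inv 0 s" and x: "x \<in> objects (state_cfg s)"
  shows "state_inv 1 (delete_pre s x)" "objects (state_cfg (delete_pre s x)) = objects (state_cfg s) - {x}"
proof -
  have v: "valid_cfg (state_cfg s)" using I unfolding state_inv_def by simp
  then have vt: "valid_cfg (top_overlay s)" "valid_cfg (join_blocks (blocks s))"
    unfolding valid_state_cfg by auto
  define D where "D = cfg_delete x (top_overlay s)"
  note DS = cfg_delete_props[OF v, of x]
  note DT = cfg_delete_props[OF vt(1), of x, folded D_def]
  note M = migrate_cfg_props[OF conjunct1[OF DT], of 16]
  have cfg: "state_cfg (delete_pre s x) = Join (migrate_cfg 16 D) (cfg_delete x (join_blocks (blocks s)))"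
    unfolding D_def by (rule state_cfg_delete_pre)
  have del: "cfg_delete x (state_cfg s) = Join D (cfg_delete x (join_blocks (blocks s)))"
    unfolding D_def state_cfg_def by simp
  have "valid_cfg (state_cfg (delete_pre s x))" "objects (state_cfg (delete_pre s x)) = objects (state_cfg s) - {x}"
    "slots (state_cfg (delete_pre s x)) = slots (state_cfg s)"
    using DS M unfolding cfg del[symmetric] by (auto simp: del)
  moreover have "unmigrated (migrate_cfg 16 D) \<le> unmigrated (top_overlay s) - 16"
    using M(6) unmigrated_cfg_delete[OF vt(1), of x] unfolding D_def by simp
  moreover note delete_pre_groups[OF vt(1), of x]
  moreover have "card (objects (state_cfg s) - {x}) = card (objects (state_cfg s)) - 1"
    "1 \<le> card (objects (state_cfg s))"
    using x valid_finite[OF v] by (simp, metis One_nat_def Suc_leI card_gt_0_iff empty_iff)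
  ultimately show "state_inv 1 (delete_pre s x)"
    using I good_blocks_delete migration_progress[of "unmigrated (migrate_cfg 16 D)" "unmigrated (top_overlay s)"]
    unfolding state_inv_def top_overlay_delete_pre[of s x, folded D_def]
    by (auto simp: delete_pre_def Let_def budget_map_cg_base bases_le_map_cg_base simp del: migrate_cfg.simps)
  show "objects (state_cfg (delete_pre s x)) = objects (state_cfg s) - {x}" by fact
qed

lemma delete_pre_recolour:
  assumes I: "state_inv 0 s"
  shows "card {y \<in> objects (state_cfg s) - {x}. colour (state_cfg (delete_pre s x)) y \<noteq> colour (state_cfg s) y}
    \<le> 6 * r (2 * (size0 s + 1)) + 64"
proof -
  have v: "valid_cfg (state_cfg s)" using I unfolding state_inv_def by simp
  then have vt: "valid_cfg (top_overlay s)" unfolding valid_state_cfg by auto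
  define D where "D = cfg_delete x (top_overlay s)"
  note DT = cfg_delete_props[OF vt, of x, folded D_def]
  note M = migrate_cfg_props[OF conjunct1[OF DT], of 16]
  have "card {y \<in> objects (state_cfg s) - {x}. colour (cfg_delete x (state_cfg s)) y \<noteq> colour (state_cfg s) y}
      \<le> 3 * (2 * r (2 * (size0 s + 1)) + 16)"
    using cfg_delete_recolour[OF v bases_le_state_cfg[OF I], of x]
      occurrences_le_height[OF v, of x] height_state_cfg[OF I]
    by (meson le_trans mult_le_mono1)
  moreover have "{y \<in> objects (state_cfg s) - {x}. colour (state_cfg (delete_pre s x)) y \<noteq> colour (state_cfg s) y}
      \<subseteq> {y \<in> objects (state_cfg s) - {x}. colour (cfg_delete x (state_cfg s)) y \<noteq> colour (state_cfg s) y}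
        \<union> {y \<in> objects D. colour (migrate_cfg 16 D) y \<noteq> colour D y}"
    using M(2) unfolding state_cfg_delete_pre D_def[symmetric] by (auto simp: state_cfg_def D_def)
  ultimately show ?thesis
    using M(7) valid_finite[OF v] valid_finite[OF conjunct1[OF DT]]
    by (intro order.trans[OF card_le_if_subset_Un]) auto
qed

lemma delete_step_props:
  assumes "state_inv 0 s" "x \<in> objects (state_cfg s)"
  shows "state_inv 0 (delete_step s x) \<and> objects (state_cfg (delete_step s x)) = objects (state_cfg s) - {x} \<and>
    card {y \<in> objects (state_cfg s) - {x}. colour (state_cfg (delete_step s x)) y \<noteq> colour (state_cfg s) y}
      \<le> 6 * r (2 * (size0 s + 1)) + 64"
proof -
  note P = delete_pre_props[OF assms] delete_pre_recolour[OF assms(1), of x]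
  note R = restart_props[OF P(1)]
  have "{y \<in> objects (state_cfg s) - {x}. colour (state_cfg (delete_step s x)) y \<noteq> colour (state_cfg s) y}
      = {y \<in> objects (state_cfg s) - {x}. colour (state_cfg (delete_pre s x)) y \<noteq> colour (state_cfg s) y}"
    using R P(2) unfolding delete_step_def by auto
  then show ?thesis using P R unfolding delete_step_def by simp
qed

end

section \<open>Bounds of the scheme\<close>

context cf_setting begin

definition initial_state :: "'o state" where
  "initial_state = State Empty (CGroup {} {} (init_col {}) 0) {} [] 0 0 1 0"

lemma state_inv_initial: "state_inv 0 initial_state" "objects (state_cfg initial_state) = {}"
proof -
  have "reachable {} {} (init_col {})" using reachable_init_col[of "{}"] by simp
  then show "state_inv 0 initial_state"
    unfolding state_inv_def initial_state_def state_cfg_def top_overlay_def by (simp add: bases_le_def)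
  show "objects (state_cfg initial_state) = {}"
    unfolding initial_state_def state_cfg_def top_overlay_def by simp
qed

lemma state_inv_sizes:
  assumes "state_inv 0 s"
  shows "15 * size0 s \<le> 16 * card (objects (state_cfg s))" "16 * steps s \<le> size0 s"
proof -
  have "steps s \<le> size0 s div 16" "size0 s \<le> card (objects (state_cfg s)) + steps s"
    using assms unfolding state_inv_def by auto
  then show "16 * steps s \<le> size0 s" "15 * size0 s \<le> 16 * card (objects (state_cfg s))"
    by (metis dual_order.trans div_times_less_eq_dividend mult.commute mult_le_mono2, linarith)
qed

lemma card_colours_state:
  assumes I: "state_inv 0 s" and n: "2 \<le> card (objects (state_cfg s))"
  defines "K \<equiv> ceillog2 (card (objects (state_cfg s))) + 3"
  shows "card (colour (state_cfg s) ` objects (state_cfg s)) \<le> (4 * K + 7) * gamma_sum K"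
proof -
  define n where "n = card (objects (state_cfg s))"
  have P: "valid_cfg (state_cfg s)" "card (cg_base (big s)) \<le> size0 s" "old_bound s \<le> 2 * (size0 s + 1)"
    "budget (old s) \<le> (ceillog2 (old_bound s) + 2) * (2 * gamma_sum (ceillog2 (old_bound s)))"
    "good_blocks 0 (blocks s)" "levels_increasing (blocks s)" "weight (blocks s) \<le> steps s"
    using I unfolding state_inv_def by auto
  have sizes: "size0 s \<le> 2 * n" "steps s \<le> n" using state_inv_sizes[OF I] unfolding n_def by linarith+
  have "card (cg_base (big s)) \<le> 2 ^ K"
    using P(2) sizes le_two_power_ceillog2[of n] unfolding K_def n_def by (simp add: power_add)
  then have big: "\<gamma> (card (cg_base (big s))) \<le> gamma_sum K" by (rule gamma_le_gamma_sum) simp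
  have "old_bound s \<le> 2 ^ K"
    using P(3) sizes n le_two_power_ceillog2[of n] unfolding K_def n_def by (simp add: power_add)
  then have "ceillog2 (old_bound s) \<le> K" by (rule ceillog2_le)
  then have "(ceillog2 (old_bound s) + 2) * (2 * gamma_sum (ceillog2 (old_bound s))) \<le> (K + 2) * (2 * gamma_sum K)"
    using gamma_sum_mono by (intro mult_mono) auto
  then have old: "budget (old s) \<le> (K + 2) * (2 * gamma_sum K)" using P(4) by linarith
  note B = blocks_bounds[OF P(5,6,7)]
  have "ceillog2 (steps s) \<le> K" using ceillog2_mono[OF sizes(2)] unfolding K_def n_def by simp
  then have "length (blocks s) * (2 * gamma_sum (ceillog2 (steps s))) \<le> (K + 1) * (2 * gamma_sum K)"
    using B(1) gamma_sum_mono by (intro mult_mono) auto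
  then have blocks: "budget (join_blocks (blocks s)) \<le> (K + 1) * (2 * gamma_sum K)" using B(2) by linarith
  have "card (colour (state_cfg s) ` objects (state_cfg s)) \<le> budget (state_cfg s)"
    by (rule card_colours_le_budget[OF P(1)])
  also have "\<dots> = \<gamma> (card (cg_base (big s))) + budget (old s) + budget (join_blocks (blocks s))"
    unfolding state_cfg_def top_overlay_def by simp
  also have "\<dots> \<le> (4 * K + 7) * gamma_sum K" using big old blocks by (simp add: algebra_simps)
  finally show ?thesis .
qed

lemma card_colours_state_real:
  assumes I: "state_inv 0 s"
  defines "n \<equiv> card (objects (state_cfg s))"
  shows "real (card (colour (state_cfg s) ` objects (state_cfg s)))
    \<le> 100 * real (gamma_sum (ceillog2 n + 3)) * log 2 (real n) + 100"
proof -
  define G where "G = real (gamma_sum (ceillog2 n + 3))"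
  have "0 \<le> log 2 (real n)" by (cases "n = 0") (simp_all add: log_def)
  then have rhs: "100 \<le> 100 * G * log 2 (real n) + 100" unfolding G_def by simp
  show ?thesis
  proof (cases "n \<le> 1")
    case True
    have "card (colour (state_cfg s) ` objects (state_cfg s)) \<le> n"
      unfolding n_def using I valid_finite unfolding state_inv_def by (blast intro: card_image_le)
    then show ?thesis using True rhs unfolding G_def by linarith
  next
    case False
    have "1 \<le> log 2 (real n)" using False by simp
    moreover have "real (ceillog2 n) < log 2 (real n) + 1" using ceillog2_less_log[of n] False by simp
    ultimately have "4 * real (ceillog2 n) + 19 \<le> 27 * log 2 (real n)" by linarith
    moreover have "card (colour (state_cfg s) ` objects (state_cfg s)) \<le> (4 * ceillog2 n + 19) * gamma_sum (ceillog2 n + 3)"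
      using card_colours_state[OF I] False unfolding n_def by (simp add: algebra_simps)
    then have "real (card (colour (state_cfg s) ` objects (state_cfg s))) \<le> real ((4 * ceillog2 n + 19) * gamma_sum (ceillog2 n + 3))"
      by (simp only: of_nat_le_iff)
    then have "real (card (colour (state_cfg s) ` objects (state_cfg s))) \<le> (4 * real (ceillog2 n) + 19) * G"
      unfolding G_def by simp
    moreover have "0 \<le> G" unfolding G_def by simp
    ultimately have "real (card (colour (state_cfg s) ` objects (state_cfg s))) \<le> 27 * log 2 (real n) * G"
      by (meson mult_right_mono order.trans)
    then show ?thesis using \<open>0 \<le> G\<close> \<open>1 \<le> log 2 (real n)\<close> unfolding G_def by (simp add: algebra_simps)
  qed
qed

end

lemma insertion_cost_real:
  fixes L n :: nat
  assumes "2 ^ L \<le> n + 2"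
  shows "real (2 * L + 16) \<le> 100 * log 2 (real n) + 100"
proof (cases "n = 0")
  case True
  then have "(2::nat) ^ L \<le> 2 ^ 1" using assms by simp
  then have "L \<le> 1" by (rule power_le_imp_le_exp[rotated]) simp
  then show ?thesis using True by (simp add: log_def)
next
  case False
  then have "2 ^ L \<le> 4 * n" using assms by linarith
  then have "real (2 ^ L) \<le> real (4 * n)" by (simp only: of_nat_le_iff)
  then have "2 powr real L \<le> real (4 * n)" by (simp add: powr_realpow)
  then have "real L \<le> log 2 (real (4 * n))" using False by (simp add: le_log_iff)
  also have "\<dots> = log 2 4 + log 2 (real n)" using False by (simp add: log_mult)
  finally have "real L \<le> log 2 4 + log 2 (real n)" .
  moreover have "log 2 (4::real) = 2" by (simp add: log_def ln_realpow[of 2 2, simplified])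
  moreover have "0 \<le> log 2 (real n)" using False by simp
  ultimately show ?thesis by simp
qed

lemma recolorings_to_nat: "recolorings T (to_nat \<circ> f) (to_nat \<circ> g) = card {y \<in> T. g y \<noteq> f y}"
  unfolding recolorings_def by simp

lemma ceillog2_plus_3_bigtheta: "(\<lambda>n. real (ceillog2 n + 3)) \<in> \<Theta>(\<lambda>n. ln (real n))"
proof (rule bigthetaI'[of 1 "5 / ln 2"])
  show "eventually (\<lambda>n. 1 * norm (ln (real n)) \<le> norm (real (ceillog2 n + 3)) \<and>
      norm (real (ceillog2 n + 3)) \<le> 5 / ln 2 * norm (ln (real n))) at_top"
  proof (rule eventually_at_top_linorderI[of 2])
    fix n :: nat
    assume n: "2 \<le> n"
    have l2: "log 2 (real n) = ln (real n) / ln 2" by (simp add: log_def)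
    have c: "log 2 (real n) \<le> real (ceillog2 n)" "real (ceillog2 n) < log 2 (real n) + 1"
      using ceillog2_ge_log[of n] ceillog2_less_log[of n] n by auto
    have "ln 2 \<le> ln (real n)" "0 < ln (real n)" using n by simp_all
    have "ln (real n) \<le> log 2 (real n)"
      using ln_2_less_1 \<open>0 < ln (real n)\<close> unfolding l2 by (simp add: le_divide_eq mult_left_le)
    moreover have "1 \<le> ln (real n) / ln 2" using \<open>ln 2 \<le> ln (real n)\<close> by simp
    then have "real (ceillog2 n) + 3 \<le> 5 * (ln (real n) / ln 2)" using c unfolding l2 by linarith
    then have "real (ceillog2 n + 3) \<le> 5 / ln 2 * ln (real n)" by simp
    ultimately show "1 * norm (ln (real n)) \<le> norm (real (ceillog2 n + 3)) \<and>
        norm (real (ceillog2 n + 3)) \<le> 5 / ln 2 * norm (ln (real n))"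
      using c \<open>0 < ln (real n)\<close> by simp
  qed
qed simp_all

context cf_setting begin

definition scheme_states :: "('o set \<times> ('o \<Rightarrow> nat)) set" where
  "scheme_states = {(objects (state_cfg s), to_nat \<circ> colour (state_cfg s)) | s. state_inv 0 s}"

lemma scheme_insertion:
  assumes I: "state_inv 0 s" and x: "x \<in> F - objects (state_cfg s)"
  defines "S \<equiv> objects (state_cfg s)"
  shows "\<exists>c'. (insert x S, c') \<in> scheme_states \<and>
    real (recolorings S (to_nat \<circ> colour (state_cfg s)) c') \<le> 100 * log 2 (real (card S)) + 100"
proof -
  obtain L where P: "state_inv 0 (insert_step s x)" "objects (state_cfg (insert_step s x)) = insert x S"
    "2 ^ L \<le> steps s + 2"
    "card {y \<in> S. colour (state_cfg (insert_step s x)) y \<noteq> colour (state_cfg s) y} \<le> 2 * L + 16"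
    using insert_step_props[OF I] x unfolding S_def by blast
  have "steps s \<le> card S" using state_inv_sizes[OF I] unfolding S_def by linarith
  then have "real (2 * L + 16) \<le> 100 * log 2 (real (card S)) + 100"
    using P(3) by (intro insertion_cost_real) linarith
  then have "real (recolorings S (to_nat \<circ> colour (state_cfg s)) (to_nat \<circ> colour (state_cfg (insert_step s x))))
      \<le> 100 * log 2 (real (card S)) + 100"
    using P(4) unfolding recolorings_to_nat by linarith
  moreover have "(insert x S, to_nat \<circ> colour (state_cfg (insert_step s x))) \<in> scheme_states"
    using P(1,2) unfolding scheme_states_def by auto
  ultimately show ?thesis by blast
qed

lemma scheme_deletion:
  assumes I: "state_inv 0 s" and x: "x \<in> objects (state_cfg s)"
  defines "S \<equiv> objects (state_cfg s)"
  shows "\<exists>c'. (S - {x}, c') \<in> scheme_states \<and>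
    real (recolorings (S - {x}) (to_nat \<circ> colour (state_cfg s)) c') \<le> 100 * (real (r (8 * card S)) + 1)"
proof -
  note P = delete_step_props[OF I x, folded S_def]
  have "1 \<le> card S" using x valid_finite I unfolding S_def state_inv_def
    by (metis One_nat_def Suc_leI card_gt_0_iff empty_iff)
  moreover have "15 * size0 s \<le> 16 * card S" using state_inv_sizes(1)[OF I] unfolding S_def .
  ultimately have "2 * size0 s + 2 \<le> 8 * card S" by linarith
  then have "2 * (size0 s + 1) \<le> 8 * card S" by simp
  then have "r (2 * (size0 s + 1)) \<le> r (8 * card S)" using mono_r by (simp add: monoD)
  then have "real (recolorings (S - {x}) (to_nat \<circ> colour (state_cfg s)) (to_nat \<circ> colour (state_cfg (delete_step s x))))
      \<le> 100 * (real (r (8 * card S)) + 1)"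
    using P unfolding recolorings_to_nat by simp
  moreover have "(S - {x}, to_nat \<circ> colour (state_cfg (delete_step s x))) \<in> scheme_states"
    using P unfolding scheme_states_def by auto
  ultimately show ?thesis by blast
qed

lemma dynamic_scheme:
  "dynamic_cf_scheme rel F
     (\<lambda>n. 100 * (\<Sum>i\<le>ceillog2 n + 3. real (\<gamma> (2 ^ i))) * log 2 (real n) + 100)
     (\<lambda>n. 100 * log 2 (real n) + 100) (\<lambda>n. 100 * (real (r (8 * n)) + 1)) scheme_states"
  unfolding dynamic_cf_scheme_def
proof (intro conjI ballI)
  show "\<exists>c0. ({}, c0) \<in> scheme_states"
    using state_inv_initial unfolding scheme_states_def by blast
next
  fix Sc
  assume "Sc \<in> scheme_states"
  then obtain s where I: "state_inv 0 s" and Sc: "Sc = (objects (state_cfg s), to_nat \<circ> colour (state_cfg s))"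
    unfolding scheme_states_def by blast
  have v: "valid_cfg (state_cfg s)" and F: "objects (state_cfg s) \<subseteq> F" using I unfolding state_inv_def by auto
  have "card ((to_nat \<circ> colour (state_cfg s)) ` objects (state_cfg s)) = card (colour (state_cfg s) ` objects (state_cfg s))"
    unfolding image_comp[symmetric] by (rule card_image) simp
  then show "case Sc of (S, c) \<Rightarrow> finite S \<and> S \<subseteq> F \<and> conflict_free rel S c \<and>
      real (card (c ` S)) \<le> 100 * (\<Sum>i\<le>ceillog2 (card S) + 3. real (\<gamma> (2 ^ i))) * log 2 (real (card S)) + 100 \<and>
      (\<forall>x\<in>F - S. \<exists>c'. (insert x S, c') \<in> scheme_states \<and> real (recolorings S c c') \<le> 100 * log 2 (real (card S)) + 100) \<and>
      (\<forall>x\<in>S. \<exists>c'. (S - {x}, c') \<in> scheme_states \<and> real (recolorings (S - {x}) c c') \<le> 100 * (real (r (8 * card S)) + 1))"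
    using valid_finite[OF v] F unimax_ord_conflict_free[OF valid_unimax[OF v] inj_to_nat]
      card_colours_state_real[OF I] scheme_insertion[OF I] scheme_deletion[OF I]
    unfolding Sc by (simp add: gamma_sum_def)
qed

end

theorem mainTheorem11:
  fixes rel :: "'q \<Rightarrow> 'o \<Rightarrow> bool" and F :: "'o set"
    and \<gamma> r :: "nat \<Rightarrow> nat"
  assumes "mono \<gamma>" and "mono r"
    and "\<And>S0. finite S0 \<Longrightarrow> S0 \<subseteq> F \<Longrightarrow>
           \<exists>c0. allows_weak_deletions rel \<gamma> r S0 c0"
  shows "\<exists>(k :: nat \<Rightarrow> nat) (C :: real) Inv.
           (\<lambda>n. real (k n)) \<in> \<Theta>(\<lambda>n. ln (real n)) \<and>
           dynamic_cf_scheme rel F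
             (\<lambda>n. C * (\<Sum>i\<le>k n. real (\<gamma> (2 ^ i))) * log 2 (real n) + C)
             (\<lambda>n. C * log 2 (real n) + C)
             (\<lambda>n. C * (real (r (8 * n)) + 1))
             Inv"
proof -
  interpret cf_setting rel F \<gamma> r by unfold_locales (use assms in auto)
  show ?thesis
    by (rule exI[of _ "\<lambda>n. ceillog2 n + 3"], rule exI[of _ 100], rule exI[of _ scheme_states])
      (use ceillog2_plus_3_bigtheta dynamic_scheme in simp)
qed

end
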